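(* Let $n\ge 3$ and let $g_*$ be the round metric of sectional curvature $1$ on $S^n$. For $i=1,2$ let $f_i:[a_i,b_i]\to\mathbb{R}$ be smooth functions such that (I) $f_i>0$, $f_i'>0$ and $f_i''>0$ on $[a_i,b_i]$; (II) the metric $dt^2+f_i(t)^2g_*$ on $[a_i,b_i]\times S^n$ has positive scalar curvature; (III) $f_1(b_1)<f_2(a_2)$ and $f_1'(b_1)=f_2'(a_2)$. Suppose the intervals are positioned (after translation) so that $a_2-b_1=(f_2(a_2)-f_1(b_1))/f_1'(b_1)$. Then there exists a smooth function $f:[a_1,b_2]\to\mathbb{R}$ such that (i) $f>0$ and $f'>0$ on $[a_1,b_2]$; (ii) $f=f_1$ on $[a_1,\frac{a_1+b_1}{2}]$; (iii) $f=f_2$ on $[\frac{a_2+b_2}{2},b_2]$; (iv) the metric $dt^2+f(t)^2g_*$ on $[a_1,b_2]\times S^n$ has positive scalar curvature. *)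

theory Defs
  imports Complex_Main
begin

text \<open>A smooth function on a closed interval [a,b], given together with its
  sequence of derivatives: D 0 is the function, D (Suc k) is the derivative of D k
  (one-sided at the endpoints, i.e. derivative within [a,b]).\<close>
definition smooth_jet_on :: "(nat \<Rightarrow> real \<Rightarrow> real) \<Rightarrow> real \<Rightarrow> real \<Rightarrow> bool" where
  "smooth_jet_on D a b \<longleftrightarrow>
     (\<forall>k. \<forall>x\<in>{a..b}. (D k has_real_derivative D (Suc k) x) (at x within {a..b}))"

text \<open>Scalar curvature of the warped product dt^2 + f(t)^2 g_* on I x S^n,
  g_* the round metric of sectional curvature 1, at a point with
  f = y, f' = y', f'' = y''.\<close>
definition warped_scal :: "nat \<Rightarrow> real \<Rightarrow> real \<Rightarrow> real \<Rightarrow> real" where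
  "warped_scal n y y' y'' =
     - 2 * real n * y'' / y + real n * (real n - 1) * (1 - y'^2) / y^2"

definition warped_psc :: "nat \<Rightarrow> (nat \<Rightarrow> real \<Rightarrow> real) \<Rightarrow> real \<Rightarrow> real \<Rightarrow> bool" where
  "warped_psc n D a b \<longleftrightarrow> (\<forall>t\<in>{a..b}. warped_scal n (D 0 t) (D 1 t) (D 2 t) > 0)"

end

theory Submission
  imports Defs "HOL-Analysis.Analysis" "HOL-Computational_Algebra.Polynomial"
begin

text \<open>Positive scalar curvature of dt^2 + f^2 g_* is the open condition
  2 f f'' < (n - 1) (1 - f'^2), automatic where f' < 1 and f'' \<le> 0. By the positioning
  hypothesis the tangent line of f1 at b1 is also the tangent line of f2 at a2, and it serves as a
  bridge: the Taylor parabola of f1 at b1 has its curvature switched off just after b1 and switched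
  on to f2''(a2) just before a2, by subtracting and adding rescaled double primitives of a smooth
  step function. Along the bends the value, slope and curvature stay within O(\<delta>) of those of
  f1 at b1 or of f2 at a2. Finally f1 and f2 are blended into the bridge by cutoffs of width \<delta>,
  which changes 2-jets only by O(\<delta>) because the bridge agrees with the Taylor parabolas of f1
  and f2 to third order. For \<delta> small all these perturbations stay inside the open condition.\<close>

section \<open>Jets of smooth functions\<close>

definition jet_on :: "(nat \<Rightarrow> real \<Rightarrow> real) \<Rightarrow> real set \<Rightarrow> bool" where
  "jet_on D S \<longleftrightarrow> (\<forall>k. \<forall>x\<in>S. (D k has_real_derivative D (Suc k) x) (at x within S))"

lemma smooth_jet_on_iff_jet_on: "smooth_jet_on D a b \<longleftrightarrow> jet_on D {a..b}"
  by (simp add: smooth_jet_on_def jet_on_def)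

lemma jet_onD: "jet_on D S \<Longrightarrow> x \<in> S \<Longrightarrow> (D k has_real_derivative D (Suc k) x) (at x within S)"
  by (simp add: jet_on_def)

lemma jet_on_subset: "jet_on D T \<Longrightarrow> S \<subseteq> T \<Longrightarrow> jet_on D S"
  unfolding jet_on_def by (meson DERIV_subset subsetD)

lemma jet_on_UNIV_within: "jet_on D UNIV \<Longrightarrow> (D k has_real_derivative D (Suc k) x) (at x within S)"
  using jet_onD[of D UNIV x k] DERIV_subset by blast

lemma jet_on_add: "jet_on D S \<Longrightarrow> jet_on E S \<Longrightarrow> jet_on (\<lambda>k x. D k x + E k x) S"
  unfolding jet_on_def by (blast intro: DERIV_add)

lemma jet_on_diff: "jet_on D S \<Longrightarrow> jet_on E S \<Longrightarrow> jet_on (\<lambda>k x. D k x - E k x) S"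
  unfolding jet_on_def by (blast intro: DERIV_diff)

lemma jet_on_cmult: "jet_on D S \<Longrightarrow> jet_on (\<lambda>k x. c * D k x) S"
  unfolding jet_on_def by (auto intro: DERIV_cmult)

lemma jet_on_quadratic:
  "jet_on (\<lambda>k x. if k = 0 then A + B * (x - p) + C * (x - p)^2 else if k = 1 then B + 2 * C * (x - p)
     else if k = 2 then 2 * C else 0) S"
  unfolding jet_on_def
  by (intro allI ballI, case_tac "k = 0"; case_tac "k = 1"; case_tac "k = 2";
      simp; (rule derivative_eq_intros refl | simp)+)

definition rescale :: "real \<Rightarrow> real \<Rightarrow> (nat \<Rightarrow> real \<Rightarrow> real) \<Rightarrow> nat \<Rightarrow> real \<Rightarrow> real" where
  "rescale c p D k x = c^k * D k (c * (x - p))"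

lemma jet_on_rescale:
  assumes "jet_on D UNIV"
  shows "jet_on (rescale c p D) S"
  unfolding jet_on_def
proof (intro allI ballI)
  fix k x
  have "(D k has_real_derivative D (Suc k) (c * (x - p))) (at (c * (x - p)))"
    using assms by (simp add: jet_on_def)
  moreover have "((\<lambda>x. c * (x - p)) has_real_derivative c) (at x within S)"
    by (auto intro!: derivative_eq_intros)
  ultimately have "((\<lambda>x. D k (c * (x - p))) has_real_derivative D (Suc k) (c * (x - p)) * c)
      (at x within S)"
    by (rule DERIV_chain2)
  from DERIV_cmult[OF this, of "c^k"]
  show "(rescale c p D k has_real_derivative rescale c p D (Suc k) x) (at x within S)"
    unfolding rescale_def[abs_def] by (simp add: algebra_simps)
qed

definition jet_prod :: "(nat \<Rightarrow> real \<Rightarrow> real) \<Rightarrow> (nat \<Rightarrow> real \<Rightarrow> real) \<Rightarrow> nat \<Rightarrow> real \<Rightarrow> real" where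
  "jet_prod D E k x = (\<Sum>i = 0..k. of_nat (k choose i) * D i x * E (k - i) x)"

lemma jet_prod_Suc:
  "(\<Sum>i = 0..k. of_nat (k choose i) * (D (Suc i) x * E (k - i) x + D i x * E (Suc (k - i)) x))
     = jet_prod D E (Suc k) x"
proof -
  have choose: "Suc k choose i = (k choose i) + (if i = 0 then 0 else k choose (i - 1))" for i
    by (cases i) simp_all
  show ?thesis
    unfolding jet_prod_def
    apply (simp add: choose algebra_simps sum.distrib)
    apply (subst (4) sum_Suc_reindex)
    apply (auto simp: algebra_simps Suc_diff_le intro: sum.cong)
    done
qed

lemma jet_on_prod:
  assumes "jet_on D S" "jet_on E S"
  shows "jet_on (jet_prod D E) S"
  unfolding jet_on_def
proof (intro allI ballI)
  fix k x assume x: "x \<in> S"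
  have "((\<lambda>x. of_nat (k choose i) * (D i x * E (k - i) x)) has_real_derivative
         of_nat (k choose i) * (D (Suc i) x * E (k - i) x + D i x * E (Suc (k - i)) x)) (at x within S)" for i
    using DERIV_mult[OF jet_onD[OF assms(1) x, of i] jet_onD[OF assms(2) x, of "k - i"]]
    by (intro DERIV_cmult) (simp add: mult.commute)
  then have "(jet_prod D E k has_real_derivative
      (\<Sum>i = 0..k. of_nat (k choose i) * (D (Suc i) x * E (k - i) x + D i x * E (Suc (k - i)) x)))
      (at x within S)"
    unfolding jet_prod_def[abs_def] by (intro DERIV_sum) (simp add: mult.assoc)
  then show "(jet_prod D E k has_real_derivative jet_prod D E (Suc k) x) (at x within S)"
    by (simp only: jet_prod_Suc)
qed

lemma jet_on_continuous: "jet_on D S \<Longrightarrow> continuous_on S (D k)"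
  unfolding jet_on_def continuous_on_eq_continuous_within using DERIV_continuous by blast

lemma jet_on_bounded:
  assumes "jet_on D {a..b}"
  obtains B where "\<And>x. x \<in> {a..b} \<Longrightarrow> \<bar>D k x\<bar> \<le> B"
proof -
  have "compact (D k ` {a..b})"
    by (rule compact_continuous_image[OF jet_on_continuous[OF assms]]) simp
  then obtain B where "\<forall>y\<in>D k ` {a..b}. norm y \<le> B"
    using compact_imp_bounded bounded_iff by metis
  then show ?thesis using that by force
qed

lemma increment_le_of_deriv_le:
  fixes f :: "real \<Rightarrow> real"
  assumes "a \<le> b" "\<And>x. x \<in> {a..b} \<Longrightarrow> (f has_real_derivative f' x) (at x within {a..b})"
    "\<And>x. x \<in> {a..b} \<Longrightarrow> f' x \<le> B"
  shows "f b - f a \<le> B * (b - a)"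
proof -
  have "B * a - f a \<le> B * b - f b"
  proof (rule DERIV_nonneg_imp_increasing_open[OF assms(1)])
    fix x assume x: "a < x" "x < b"
    then have "(f has_real_derivative f' x) (at x)"
      using assms(2)[of x] at_within_Icc_at[of a x b] by simp
    then have "((\<lambda>x. B * x - f x) has_real_derivative B - f' x) (at x)"
      by (auto intro!: derivative_eq_intros)
    then show "\<exists>y. ((\<lambda>x. B * x - f x) has_real_derivative y) (at x) \<and> 0 \<le> y"
      using assms(3)[of x] x by auto
  next
    have "continuous_on {a..b} f"
      unfolding continuous_on_eq_continuous_within using assms(2) DERIV_continuous by blast
    then show "continuous_on {a..b} (\<lambda>x. B * x - f x)" by (intro continuous_intros)
  qed
  then show ?thesis by (simp add: algebra_simps)
qed

lemma increment_ge_of_deriv_ge: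
  fixes f :: "real \<Rightarrow> real"
  assumes "a \<le> b" "\<And>x. x \<in> {a..b} \<Longrightarrow> (f has_real_derivative f' x) (at x within {a..b})"
    "\<And>x. x \<in> {a..b} \<Longrightarrow> B \<le> f' x"
  shows "B * (b - a) \<le> f b - f a"
proof -
  have "(\<lambda>x. - f x) b - (\<lambda>x. - f x) a \<le> (- B) * (b - a)"
    by (rule increment_le_of_deriv_le[OF assms(1), of _ "\<lambda>x. - f' x"])
       (use assms in \<open>auto intro: DERIV_minus\<close>)
  then show ?thesis by (simp add: algebra_simps)
qed

lemma abs_increment_le_of_deriv_le:
  fixes f :: "real \<Rightarrow> real"
  assumes "a \<le> b" "\<And>x. x \<in> {a..b} \<Longrightarrow> (f has_real_derivative f' x) (at x within {a..b})"
    "\<And>x. x \<in> {a..b} \<Longrightarrow> \<bar>f' x\<bar> \<le> B"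
  shows "\<bar>f b - f a\<bar> \<le> B * (b - a)"
  using field_differentiable_bound[of "{a..b}" f f' B b a] assms by auto

lemma taylor2_remainder_bounds:
  assumes D: "jet_on D S" and S: "convex S" and p: "p \<in> S" and t: "t \<in> S"
    and E: "\<And>x. x \<in> S \<Longrightarrow> \<bar>D 3 x\<bar> \<le> E" and tp: "\<bar>t - p\<bar> \<le> d"
  shows "\<bar>D 2 t - D 2 p\<bar> \<le> E * d"
    and "\<bar>D 1 t - (D 1 p + D 2 p * (t - p))\<bar> \<le> E * d^2"
    and "\<bar>D 0 t - (D 0 p + D 1 p * (t - p) + D 2 p / 2 * (t - p)^2)\<bar> \<le> E * d^3"
proof -
  define T where "T = S \<inter> cball p d"
  have T: "convex T" "p \<in> T" "t \<in> T" "T \<subseteq> S"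
    using S p t tp by (auto simp: T_def dist_real_def abs_minus_commute intro: convex_Int)
  have dT: "(D k has_real_derivative D (Suc k) x) (at x within T)" if "x \<in> T" for k x
    using jet_onD[OF jet_on_subset[OF D T(4)] that] .
  have near: "\<bar>x - p\<bar> \<le> d" if "x \<in> T" for x
    using that by (simp add: T_def dist_real_def abs_minus_commute)
  have d: "0 \<le> d" using tp by linarith
  have bound: "\<bar>f x - f p\<bar> \<le> B * d"
    if "\<And>x. x \<in> T \<Longrightarrow> (f has_real_derivative f' x) (at x within T)"
       "\<And>x. x \<in> T \<Longrightarrow> \<bar>f' x\<bar> \<le> B" "x \<in> T" for f f' B x
  proof -
    have "\<bar>f x - f p\<bar> \<le> B * \<bar>x - p\<bar>"
      using field_differentiable_bound[OF T(1), of f f' B x p] that T by auto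
    also have "\<dots> \<le> B * d"
      using that(2)[OF T(2)] by (intro mult_left_mono[OF near[OF that(3)]]) linarith
    finally show ?thesis .
  qed
  have D2: "\<bar>D 2 x - D 2 p\<bar> \<le> E * d" if "x \<in> T" for x
    by (rule bound[OF _ _ that]) (use dT T E in \<open>auto simp: numeral_3_eq_3 numeral_2_eq_2\<close>)
  have D1: "\<bar>D 1 x - (D 1 p + D 2 p * (x - p))\<bar> \<le> E * d^2" if "x \<in> T" for x
  proof -
    have "\<bar>D 1 x - (D 1 p + D 2 p * (x - p)) - (D 1 p - (D 1 p + D 2 p * (p - p)))\<bar> \<le> (E * d) * d"
      by (rule bound[OF _ _ that]) (use dT D2 in \<open>auto intro!: derivative_eq_intros simp: numeral_2_eq_2\<close>)
    then show ?thesis by (simp add: power2_eq_square)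
  qed
  show "\<bar>D 2 t - D 2 p\<bar> \<le> E * d" using D2 T by blast
  show "\<bar>D 1 t - (D 1 p + D 2 p * (t - p))\<bar> \<le> E * d^2" using D1 T by blast
  have h0: "((\<lambda>x. D 0 x - (D 0 p + D 1 p * (x - p) + D 2 p / 2 * (x - p)^2)) has_real_derivative
      D 1 x - (D 1 p + D 2 p * (x - p))) (at x within T)" if "x \<in> T" for x
    using dT[OF that, of 0] by (auto intro!: derivative_eq_intros simp: field_simps)
  have "\<bar>D 0 t - (D 0 p + D 1 p * (t - p) + D 2 p / 2 * (t - p)^2)
        - (D 0 p - (D 0 p + D 1 p * (p - p) + D 2 p / 2 * (p - p)^2))\<bar> \<le> (E * d^2) * d"
    by (rule bound[OF h0 D1 T(3)])
  then show "\<bar>D 0 t - (D 0 p + D 1 p * (t - p) + D 2 p / 2 * (t - p)^2)\<bar> \<le> E * d^3"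
    by (simp add: power3_eq_cube power2_eq_square)
qed

lemma has_real_derivative_within_closed_Un:
  assumes "closed S" "closed T"
    and "x \<in> S \<Longrightarrow> (f has_real_derivative d) (at x within S)"
    and "x \<in> T \<Longrightarrow> (f has_real_derivative d) (at x within T)"
  shows "(f has_real_derivative d) (at x within S \<union> T)"
proof -
  have "(f has_real_derivative d) (at x within U)"
    if "closed U" "x \<in> U \<Longrightarrow> (f has_real_derivative d) (at x within U)" for U
  proof (cases "x \<in> U")
    case False
    then have "\<not> x islimpt U" using that(1) closed_limpt by blast
    then have "at x within U = bot" by (simp add: trivial_limit_within)
    then show ?thesis by (simp add: has_field_derivative_iff)
  qed (use that in simp)
  then have "((\<lambda>y. (f y - f x) / (y - x)) \<longlongrightarrow> d) (at x within S)"
    "((\<lambda>y. (f y - f x) / (y - x)) \<longlongrightarrow> d) (at x within T)"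
    using assms unfolding has_field_derivative_iff by blast+
  then show ?thesis unfolding has_field_derivative_iff by (simp add: Lim_within_Un)
qed

lemma jet_on_glue:
  assumes "a \<le> b" "b \<le> c" and D: "jet_on D {a..b}" and E: "jet_on E {b..c}"
    and eq: "\<And>k. D k b = E k b"
  shows "jet_on (\<lambda>k x. if x \<le> b then D k x else E k x) {a..c}"
  unfolding jet_on_def
proof (intro allI ballI)
  fix k x
  define G where "G = (\<lambda>k x. if x \<le> b then D k x else E k x)"
  have GD: "G k y = D k y" if "y \<in> {a..b}" for k y using that by (simp add: G_def)
  have GE: "G k y = E k y" if "y \<in> {b..c}" for k y using that eq by (auto simp: G_def)
  have "(G k has_real_derivative G (Suc k) x) (at x within {a..b} \<union> {b..c})"
  proof (rule has_real_derivative_within_closed_Un)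
    assume x: "x \<in> {a..b}"
    show "(G k has_real_derivative G (Suc k) x) (at x within {a..b})"
      using has_field_derivative_transform_within[OF jet_onD[OF D x] zero_less_one x] GD x by simp
  next
    assume x: "x \<in> {b..c}"
    show "(G k has_real_derivative G (Suc k) x) (at x within {b..c})"
      using has_field_derivative_transform_within[OF jet_onD[OF E x] zero_less_one x] GE x by simp
  qed simp_all
  moreover have "{a..b} \<union> {b..c} = {a..c}" using assms(1,2) by auto
  ultimately show "(G k has_real_derivative G (Suc k) x) (at x within {a..c})" by simp
qed

definition jet_primitive :: "(nat \<Rightarrow> real \<Rightarrow> real) \<Rightarrow> nat \<Rightarrow> real \<Rightarrow> real" where
  "jet_primitive D k x = (if k = 0 then integral {-1..x} (D 0) else D (k - 1) x)"

lemma jet_primitive_nonpos: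
  assumes vanish: "\<And>k u. u \<le> 0 \<Longrightarrow> D k u = 0" and x: "x \<le> 0"
  shows "jet_primitive D k x = 0"
proof -
  have "integral {-1..x} (D 0) = integral {-1..x} (\<lambda>_. 0)"
    by (rule integral_cong) (use x vanish in simp)
  then show ?thesis using x vanish by (simp add: jet_primitive_def)
qed

lemma jet_on_primitive:
  assumes D: "jet_on D UNIV" and vanish: "\<And>u. u \<le> 0 \<Longrightarrow> D 0 u = 0"
  shows "jet_on (jet_primitive D) UNIV"
proof -
  have cont: "continuous_on UNIV (D 0)" using jet_on_continuous[OF D] .
  have primitive: "((\<lambda>x. integral {-1..x} (D 0)) has_real_derivative D 0 x) (at x)" for x
  proof (cases "x > -1")
    case True
    have "x \<in> interior {-1..x+1}" using True by simp
    then have "at x within {-1..x+1} = at x" by (rule at_within_interior)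
    moreover have "((\<lambda>x. integral {-1..x} (D 0)) has_real_derivative D 0 x) (at x within {-1..x+1})"
      by (rule integral_has_real_derivative) (use True cont continuous_on_subset in auto)
    ultimately show ?thesis by simp
  next
    case False
    have zero: "integral {-1..y} (D 0) = 0" if "y < 0" for y
    proof -
      have "integral {-1..y} (D 0) = integral {-1..y} (\<lambda>_. 0)"
        by (rule integral_cong) (use that vanish in simp)
      then show ?thesis by simp
    qed
    have "((\<lambda>_. 0) has_real_derivative 0) (at x)" by simp
    then have "((\<lambda>x. integral {-1..x} (D 0)) has_real_derivative 0) (at x)"
      by (rule has_field_derivative_transform_within_open[of _ _ _ "{..<0}"]) (use False zero in auto)
    then show ?thesis using False vanish by simp
  qed
  show ?thesis
    unfolding jet_on_def
  proof (intro allI ballI)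
    fix k x
    show "(jet_primitive D k has_real_derivative jet_primitive D (Suc k) x) (at x within UNIV)"
      using primitive[of x] jet_onD[OF D, of x "k - 1"]
      by (cases k) (simp_all add: jet_primitive_def[abs_def])
  qed
qed

definition blend ::
  "(nat \<Rightarrow> real \<Rightarrow> real) \<Rightarrow> (nat \<Rightarrow> real \<Rightarrow> real) \<Rightarrow> (nat \<Rightarrow> real \<Rightarrow> real) \<Rightarrow> nat \<Rightarrow> real \<Rightarrow> real"
  where "blend \<sigma> A B k x = A k x + jet_prod \<sigma> (\<lambda>k x. B k x - A k x) k x"

lemma jet_on_blend: "jet_on \<sigma> S \<Longrightarrow> jet_on A S \<Longrightarrow> jet_on B S \<Longrightarrow> jet_on (blend \<sigma> A B) S"
  unfolding blend_def[abs_def] by (intro jet_on_add jet_on_prod jet_on_diff)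

lemma blend_eq_left: "(\<And>i. \<sigma> i x = 0) \<Longrightarrow> blend \<sigma> A B k x = A k x"
  by (simp add: blend_def jet_prod_def)

lemma blend_eq_right:
  assumes "\<sigma> 0 x = 1" "\<And>i. 0 < i \<Longrightarrow> \<sigma> i x = 0"
  shows "blend \<sigma> A B k x = B k x"
proof -
  have "jet_prod \<sigma> F k x = F k x" for F
    unfolding jet_prod_def using assms by (subst sum.atLeast_Suc_atMost) (auto intro!: sum.neutral)
  then show ?thesis by (simp add: blend_def)
qed

lemma blend_012:
  "blend \<sigma> A B 0 x = A 0 x + \<sigma> 0 x * (B 0 x - A 0 x)"
  "blend \<sigma> A B 1 x = A 1 x + (\<sigma> 0 x * (B 1 x - A 1 x) + \<sigma> 1 x * (B 0 x - A 0 x))"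
  "blend \<sigma> A B 2 x =
     A 2 x + (\<sigma> 0 x * (B 2 x - A 2 x) + 2 * \<sigma> 1 x * (B 1 x - A 1 x) + \<sigma> 2 x * (B 0 x - A 0 x))"
  by (simp_all add: blend_def jet_prod_def numeral_2_eq_2)

lemma blend_012_complement:
  "blend \<sigma> A B 0 x = B 0 x + (1 - \<sigma> 0 x) * (A 0 x - B 0 x)"
  "blend \<sigma> A B 1 x = B 1 x + ((1 - \<sigma> 0 x) * (A 1 x - B 1 x) + (- \<sigma> 1 x) * (A 0 x - B 0 x))"
  "blend \<sigma> A B 2 x = B 2 x + ((1 - \<sigma> 0 x) * (A 2 x - B 2 x) + 2 * (- \<sigma> 1 x) * (A 1 x - B 1 x)
     + (- \<sigma> 2 x) * (A 0 x - B 0 x))"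
  by (simp_all only: blend_012) (simp_all add: algebra_simps)

lemma blend_remainder_bounds:
  fixes d K \<tau>0 \<tau>1 \<tau>2 g0 g1 g2 G0 G1 G2 :: real
  assumes d: "0 < d" and \<tau>: "0 \<le> \<tau>0" "\<tau>0 \<le> 1" "\<bar>\<tau>1\<bar> * d \<le> 2 * K" "\<bar>\<tau>2\<bar> * d^2 \<le> 4 * K"
    and g: "\<bar>g0\<bar> \<le> G0 * d^2" "\<bar>g1\<bar> \<le> G1 * d" "\<bar>g2\<bar> \<le> G2"
  shows "\<bar>\<tau>0 * g0\<bar> \<le> G0 * d^2"
    and "\<bar>\<tau>0 * g1 + \<tau>1 * g0\<bar> \<le> (G1 + 2 * K * G0) * d"
    and "\<bar>\<tau>0 * g2 + 2 * \<tau>1 * g1 + \<tau>2 * g0\<bar> \<le> G2 + 4 * K * G1 + 4 * K * G0"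
proof -
  have G: "0 \<le> G0" "0 \<le> G1"
    using g(1,2) d by (smt (verit) zero_le_mult_iff zero_less_power)+
  have \<tau>0: "\<bar>\<tau>0 * g\<bar> \<le> \<bar>g\<bar>" for g
    using \<tau> by (simp add: abs_mult mult_left_le_one_le)
  have "\<bar>\<tau>1 * g0\<bar> \<le> \<bar>\<tau>1\<bar> * (G0 * d^2)" by (simp add: abs_mult g(1) mult_left_mono)
  also have "\<dots> = (\<bar>\<tau>1\<bar> * d) * G0 * d" by (simp add: power2_eq_square)
  also have "\<dots> \<le> 2 * K * G0 * d" using \<tau>(3) G d by (intro mult_right_mono) auto
  finally have \<tau>1g0: "\<bar>\<tau>1 * g0\<bar> \<le> 2 * K * G0 * d" .
  have "\<bar>\<tau>1 * g1\<bar> \<le> \<bar>\<tau>1\<bar> * (G1 * d)" by (simp add: abs_mult g(2) mult_left_mono)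
  also have "\<dots> = (\<bar>\<tau>1\<bar> * d) * G1" by simp
  also have "\<dots> \<le> 2 * K * G1" using \<tau>(3) G by (intro mult_right_mono) auto
  finally have \<tau>1g1: "\<bar>\<tau>1 * g1\<bar> \<le> 2 * K * G1" .
  have "\<bar>\<tau>2 * g0\<bar> \<le> \<bar>\<tau>2\<bar> * (G0 * d^2)" by (simp add: abs_mult g(1) mult_left_mono)
  also have "\<dots> = (\<bar>\<tau>2\<bar> * d^2) * G0" by simp
  also have "\<dots> \<le> 4 * K * G0" using \<tau>(4) G by (intro mult_right_mono) auto
  finally have \<tau>2g0: "\<bar>\<tau>2 * g0\<bar> \<le> 4 * K * G0" .
  show "\<bar>\<tau>0 * g0\<bar> \<le> G0 * d^2" using \<tau>0[of g0] g(1) by linarith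
  show "\<bar>\<tau>0 * g1 + \<tau>1 * g0\<bar> \<le> (G1 + 2 * K * G0) * d"
    using \<tau>0[of g1] g(2) \<tau>1g0 by (simp add: algebra_simps abs_le_iff) linarith
  show "\<bar>\<tau>0 * g2 + 2 * \<tau>1 * g1 + \<tau>2 * g0\<bar> \<le> G2 + 4 * K * G1 + 4 * K * G0"
    using \<tau>0[of g2] g(3) \<tau>1g1 \<tau>2g0 by (simp add: abs_le_iff) linarith
qed

lemma blend_close_to_start:
  assumes \<sigma>: "0 < d" "0 \<le> \<sigma> 0 x" "\<sigma> 0 x \<le> 1" "\<bar>\<sigma> 1 x\<bar> * d \<le> 2 * K" "\<bar>\<sigma> 2 x\<bar> * d^2 \<le> 4 * K"
    and gap: "\<bar>B 0 x - A 0 x\<bar> \<le> G0 * d^2" "\<bar>B 1 x - A 1 x\<bar> \<le> G1 * d" "\<bar>B 2 x - A 2 x\<bar> \<le> G2"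
  shows "\<bar>blend \<sigma> A B 0 x - A 0 x\<bar> \<le> G0 * d^2"
    and "\<bar>blend \<sigma> A B 1 x - A 1 x\<bar> \<le> (G1 + 2 * K * G0) * d"
    and "\<bar>blend \<sigma> A B 2 x - A 2 x\<bar> \<le> G2 + 4 * K * G1 + 4 * K * G0"
  unfolding blend_012 using blend_remainder_bounds[OF \<sigma> gap] by simp_all

lemma blend_close_to_end:
  assumes \<sigma>: "0 < d" "0 \<le> \<sigma> 0 x" "\<sigma> 0 x \<le> 1" "\<bar>\<sigma> 1 x\<bar> * d \<le> 2 * K" "\<bar>\<sigma> 2 x\<bar> * d^2 \<le> 4 * K"
    and gap: "\<bar>A 0 x - B 0 x\<bar> \<le> G0 * d^2" "\<bar>A 1 x - B 1 x\<bar> \<le> G1 * d" "\<bar>A 2 x - B 2 x\<bar> \<le> G2"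
  shows "\<bar>blend \<sigma> A B 0 x - B 0 x\<bar> \<le> G0 * d^2"
    and "\<bar>blend \<sigma> A B 1 x - B 1 x\<bar> \<le> (G1 + 2 * K * G0) * d"
    and "\<bar>blend \<sigma> A B 2 x - B 2 x\<bar> \<le> G2 + 4 * K * G1 + 4 * K * G0"
  unfolding blend_012_complement
  using blend_remainder_bounds[of d "1 - \<sigma> 0 x" "- \<sigma> 1 x" K "- \<sigma> 2 x", OF _ _ _ _ _ gap] \<sigma>
  by simp_all

section \<open>A smooth step function\<close>

text \<open>flat_exp k is the k-th derivative of the flat function exp (-1/x), extended by 0 to x \<le> 0;
  for x > 0 it equals P_k(1/x) exp (-1/x) with P_k = flat_exp_poly k.\<close>
fun flat_exp_poly :: "nat \<Rightarrow> real poly" where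
  "flat_exp_poly 0 = 1"
| "flat_exp_poly (Suc k) = [:0, 0, 1:] * (flat_exp_poly k - pderiv (flat_exp_poly k))"

definition flat_exp :: "nat \<Rightarrow> real \<Rightarrow> real" where
  "flat_exp k x = (if x \<le> 0 then 0 else poly (flat_exp_poly k) (1 / x) * exp (- 1 / x))"

lemma poly_times_exp_neg_tendsto_0: "((\<lambda>u. poly Q u * exp (- u)) \<longlongrightarrow> 0) (at_top :: real filter)"
proof -
  have eq: "(\<lambda>u. poly Q u * exp (- u)) = (\<lambda>u. \<Sum>i\<le>degree Q. coeff Q i * (u ^ i / exp u))"
    by (auto simp: poly_altdef sum_divide_distrib exp_minus field_simps)
  have "((\<lambda>u. \<Sum>i\<le>degree Q. coeff Q i * (u ^ i / exp u)) \<longlongrightarrow> (\<Sum>i\<le>degree Q. coeff Q i * 0)) at_top"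
    by (intro tendsto_sum tendsto_mult tendsto_const tendsto_power_div_exp_0)
  then show ?thesis unfolding eq by simp
qed

lemma poly_inverse_times_exp_tendsto_0:
  "((\<lambda>x. poly Q (1 / x) * exp (- 1 / x)) \<longlongrightarrow> 0) (at_right (0::real))"
proof -
  have "((\<lambda>x. poly Q (inverse x) * exp (- inverse x)) \<longlongrightarrow> 0) (at_right (0::real))"
    using filterlim_compose[OF poly_times_exp_neg_tendsto_0 filterlim_inverse_at_top_right]
    by (simp add: o_def)
  then show ?thesis by (simp add: divide_inverse)
qed

lemma has_real_derivative_poly_inverse_times_exp:
  assumes "x > 0"
  shows "((\<lambda>x. poly (flat_exp_poly k) (1 / x) * exp (- 1 / x)) has_real_derivative
          poly (flat_exp_poly (Suc k)) (1 / x) * exp (- 1 / x)) (at x)"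
proof -
  have "((\<lambda>x. poly (flat_exp_poly k) (1 / x) * exp (- 1 / x)) has_real_derivative
      poly (pderiv (flat_exp_poly k)) (1 / x) * (- 1 / x^2) * exp (- 1 / x)
      + poly (flat_exp_poly k) (1 / x) * (exp (- 1 / x) * (1 / x^2))) (at x)"
    using assms
    by (auto intro!: derivative_eq_intros DERIV_chain2[OF poly_DERIV]
        simp: power2_eq_square field_simps)
  then show ?thesis by (simp add: algebra_simps power2_eq_square)
qed

lemma flat_exp_nonpos: "x \<le> 0 \<Longrightarrow> flat_exp k x = 0"
  by (simp add: flat_exp_def)

lemma has_real_derivative_flat_exp_0: "(flat_exp k has_real_derivative flat_exp (Suc k) 0) (at 0)"
proof -
  have right: "((\<lambda>y. flat_exp k y / y) \<longlongrightarrow> 0) (at_right 0)"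
  proof (rule Lim_transform_eventually[OF poly_inverse_times_exp_tendsto_0[of "pCons 0 (flat_exp_poly k)"]])
    show "\<forall>\<^sub>F y in at_right 0. poly (pCons 0 (flat_exp_poly k)) (1 / y) * exp (- 1 / y) = flat_exp k y / y"
      by (auto simp: eventually_at_right_less flat_exp_def eventually_at_filter)
  qed
  have left: "((\<lambda>y. flat_exp k y / y) \<longlongrightarrow> 0) (at_left 0)"
  proof (rule Lim_transform_eventually[OF tendsto_const[of 0]])
    show "\<forall>\<^sub>F y in at_left (0::real). 0 = flat_exp k y / y"
      unfolding eventually_at_filter by (auto simp: flat_exp_def)
  qed
  have "((\<lambda>y. (flat_exp k y - flat_exp k 0) / (y - 0)) \<longlongrightarrow> flat_exp (Suc k) 0) (at 0)"
    using filterlim_at_split[of "\<lambda>y. flat_exp k y / y" "nhds 0" 0] right left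
    by (simp add: flat_exp_def)
  then show ?thesis unfolding has_field_derivative_iff by simp
qed

lemma jet_on_flat_exp: "jet_on flat_exp UNIV"
  unfolding jet_on_def
proof (intro allI ballI)
  fix k and x :: real
  consider "x > 0" | "x < 0" | "x = 0" by linarith
  then show "(flat_exp k has_real_derivative flat_exp (Suc k) x) (at x within UNIV)"
  proof cases
    case 1
    have "((\<lambda>x. poly (flat_exp_poly k) (1 / x) * exp (- 1 / x)) has_real_derivative
        flat_exp (Suc k) x) (at x)"
      using has_real_derivative_poly_inverse_times_exp[OF 1] 1 by (simp add: flat_exp_def)
    then show ?thesis
      by (rule has_field_derivative_transform_within_open[of _ _ _ "{0<..}"])
         (use 1 in \<open>auto simp: flat_exp_def\<close>)
  next
    case 2
    have "((\<lambda>_. 0) has_real_derivative 0) (at x)" by simp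
    then have "(flat_exp k has_real_derivative 0) (at x)"
      by (rule has_field_derivative_transform_within_open[of _ _ _ "{..<0}"])
         (use 2 in \<open>simp_all add: flat_exp_nonpos\<close>)
    then show ?thesis using 2 flat_exp_nonpos[of x "Suc k"] by simp
  next
    case 3
    then show ?thesis using has_real_derivative_flat_exp_0[of k] by simp
  qed
qed

definition bump :: "nat \<Rightarrow> real \<Rightarrow> real" where
  "bump = jet_prod flat_exp (rescale (-1) 1 flat_exp)"

lemma jet_on_bump: "jet_on bump UNIV"
  unfolding bump_def by (intro jet_on_prod jet_on_flat_exp jet_on_rescale)

lemma bump_outside: "x \<le> 0 \<or> 1 \<le> x \<Longrightarrow> bump k x = 0"
  unfolding bump_def jet_prod_def rescale_def by (rule sum.neutral) (auto simp: flat_exp_nonpos)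

lemma bump_0: "bump 0 x = flat_exp 0 x * flat_exp 0 (1 - x)"
  by (simp add: bump_def jet_prod_def rescale_def)

lemma bump_nonneg: "0 \<le> bump 0 x"
  by (simp add: bump_0 flat_exp_def)

lemma bump_pos: "0 < x \<Longrightarrow> x < 1 \<Longrightarrow> 0 < bump 0 x"
  by (simp add: bump_0 flat_exp_def)

definition bump_mass :: real where
  "bump_mass = jet_primitive bump 0 1"

lemma bump_mass_pos: "0 < bump_mass"
proof -
  have d: "\<And>x. (jet_primitive bump 0 has_real_derivative bump 0 x) (at x)"
    using jet_onD[OF jet_on_primitive[OF jet_on_bump], of _ 0] bump_outside
    by (simp add: jet_primitive_def)
  have c: "continuous_on {0..1} (jet_primitive bump 0)"
    using jet_on_continuous[OF jet_on_primitive[OF jet_on_bump], of 0] continuous_on_subset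
    by (blast intro: bump_outside)
  have dd: "\<And>x. 0 < x \<Longrightarrow> x < 1 \<Longrightarrow> jet_primitive bump 0 differentiable (at x)"
    using d real_differentiable_def by blast
  obtain l z where z: "0 < z" "z < 1" "(jet_primitive bump 0 has_real_derivative l) (at z)"
      "jet_primitive bump 0 1 - jet_primitive bump 0 0 = (1 - 0) * l"
    using MVT[OF zero_less_one c dd] by blast
  have "l = bump 0 z" using DERIV_unique[OF z(3) d] .
  moreover have "jet_primitive bump 0 0 = 0"
    by (rule jet_primitive_nonpos) (simp_all add: bump_outside)
  ultimately show ?thesis using z bump_pos[of z] by (simp add: bump_mass_def)
qed

definition smooth_step :: "nat \<Rightarrow> real \<Rightarrow> real" where
  "smooth_step k x = jet_primitive bump k x / bump_mass"

lemma jet_on_smooth_step: "jet_on smooth_step UNIV"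
proof -
  have "jet_on (\<lambda>k x. inverse bump_mass * jet_primitive bump k x) UNIV"
    by (intro jet_on_cmult jet_on_primitive jet_on_bump) (simp add: bump_outside)
  then show ?thesis unfolding smooth_step_def[abs_def] by (simp add: divide_inverse mult.commute)
qed

lemma smooth_step_nonpos: "x \<le> 0 \<Longrightarrow> smooth_step k x = 0"
  by (simp add: smooth_step_def jet_primitive_nonpos bump_outside)

lemma smooth_step_deriv_ge1: "1 \<le> x \<Longrightarrow> 0 < k \<Longrightarrow> smooth_step k x = 0"
  by (simp add: smooth_step_def jet_primitive_def bump_outside)

lemma has_real_derivative_smooth_step:
  "(smooth_step 0 has_real_derivative bump 0 x / bump_mass) (at x within S)"
  using jet_on_UNIV_within[OF jet_on_smooth_step, of 0 x S] by (simp add: smooth_step_def jet_primitive_def)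

lemma smooth_step_ge1: "1 \<le> x \<Longrightarrow> smooth_step 0 x = 1"
proof -
  assume x: "1 \<le> x"
  have "\<bar>smooth_step 0 x - smooth_step 0 1\<bar> \<le> 0 * (x - 1)"
    by (rule abs_increment_le_of_deriv_le[OF x has_real_derivative_smooth_step]) (simp add: bump_outside)
  then show ?thesis using bump_mass_pos by (simp add: smooth_step_def bump_mass_def)
qed

lemma smooth_step_mono: "x \<le> y \<Longrightarrow> smooth_step 0 x \<le> smooth_step 0 y"
  using increment_ge_of_deriv_ge[of x y "smooth_step 0" _ 0, OF _ has_real_derivative_smooth_step]
    bump_nonneg bump_mass_pos by simp

lemma smooth_step_bounds: "0 \<le> smooth_step 0 x" "smooth_step 0 x \<le> 1"
  using smooth_step_mono[of 0 x] smooth_step_mono[of x 1] smooth_step_nonpos[of 0]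
    smooth_step_ge1[of 1] smooth_step_nonpos[of x] smooth_step_ge1[of x]
  by (cases "x \<le> 0"; cases "1 \<le> x"; simp)+

lemma smooth_step_deriv_bound:
  obtains B where "\<And>x. \<bar>smooth_step 1 x\<bar> \<le> B \<and> \<bar>smooth_step 2 x\<bar> \<le> B"
proof -
  obtain B1 where B1: "\<And>x. x \<in> {0..1} \<Longrightarrow> \<bar>smooth_step 1 x\<bar> \<le> B1"
    using jet_on_bounded[OF jet_on_subset[OF jet_on_smooth_step]] by blast
  obtain B2 where B2: "\<And>x. x \<in> {0..1} \<Longrightarrow> \<bar>smooth_step 2 x\<bar> \<le> B2"
    using jet_on_bounded[OF jet_on_subset[OF jet_on_smooth_step]] by blast
  have "0 \<le> B1" using B1[of 0] by simp
  then have "\<bar>smooth_step 1 x\<bar> \<le> max B1 B2 \<and> \<bar>smooth_step 2 x\<bar> \<le> max B1 B2" for x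
    using B1[of x] B2[of x] smooth_step_nonpos[of x] smooth_step_deriv_ge1[of x]
    by (cases "x \<in> {0..1}") (auto simp: not_le)
  then show ?thesis using that by blast
qed

definition step_primitive :: "nat \<Rightarrow> real \<Rightarrow> real" where
  "step_primitive = jet_primitive smooth_step"

definition step_primitive2 :: "nat \<Rightarrow> real \<Rightarrow> real" where
  "step_primitive2 = jet_primitive step_primitive"

lemma jet_on_step_primitive: "jet_on step_primitive UNIV"
  unfolding step_primitive_def by (intro jet_on_primitive jet_on_smooth_step) (simp add: smooth_step_nonpos)

lemma step_primitive_nonpos: "x \<le> 0 \<Longrightarrow> step_primitive k x = 0"
  unfolding step_primitive_def by (rule jet_primitive_nonpos) (simp_all add: smooth_step_nonpos)

lemma jet_on_step_primitive2: "jet_on step_primitive2 UNIV"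
  unfolding step_primitive2_def
  by (intro jet_on_primitive jet_on_step_primitive) (simp add: step_primitive_nonpos)

lemma step_primitive2_nonpos: "x \<le> 0 \<Longrightarrow> step_primitive2 k x = 0"
  unfolding step_primitive2_def by (rule jet_primitive_nonpos) (simp_all add: step_primitive_nonpos)

lemma step_primitive_derivs:
  "step_primitive 1 x = smooth_step 0 x"
  "step_primitive2 1 x = step_primitive 0 x"
  "step_primitive2 2 x = smooth_step 0 x"
  by (simp_all add: step_primitive_def step_primitive2_def jet_primitive_def numeral_2_eq_2)

lemma has_real_derivative_step_primitive:
  "(step_primitive 0 has_real_derivative smooth_step 0 x) (at x within S)"
  "(step_primitive2 0 has_real_derivative step_primitive 0 x) (at x within S)"
  using jet_on_UNIV_within[OF jet_on_step_primitive, of 0 x S]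
    jet_on_UNIV_within[OF jet_on_step_primitive2, of 0 x S]
  by (simp_all add: step_primitive_derivs[unfolded One_nat_def])

lemma step_primitive_bounds: "0 \<le> u \<Longrightarrow> 0 \<le> step_primitive 0 u \<and> step_primitive 0 u \<le> u"
  using increment_ge_of_deriv_ge[of 0 u "step_primitive 0" _ 0, OF _ has_real_derivative_step_primitive(1)]
    increment_le_of_deriv_le[of 0 u "step_primitive 0" _ 1, OF _ has_real_derivative_step_primitive(1)]
    smooth_step_bounds step_primitive_nonpos[of 0 0]
  by simp

lemma step_primitive2_bounds: "0 \<le> u \<Longrightarrow> 0 \<le> step_primitive2 0 u \<and> step_primitive2 0 u \<le> u * u"
  using increment_ge_of_deriv_ge[of 0 u "step_primitive2 0" _ 0, OF _ has_real_derivative_step_primitive(2)]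
    increment_le_of_deriv_le[of 0 u "step_primitive2 0" _ u, OF _ has_real_derivative_step_primitive(2)]
    step_primitive_bounds step_primitive2_nonpos[of 0 0]
  by force

definition step_lag :: real where
  "step_lag = 1 - step_primitive 0 1"

definition step_excess :: real where
  "step_excess = step_primitive2 0 1 - (step_primitive 0 1)^2 / 2"

lemma step_lag_bounds: "0 \<le> step_lag" "step_lag \<le> 1"
  using step_primitive_bounds[of 1] by (simp_all add: step_lag_def)

lemma step_primitive_ge1: "1 \<le> u \<Longrightarrow> step_primitive 0 u = u - step_lag"
proof -
  assume u: "1 \<le> u"
  have "\<bar>(step_primitive 0 u - u) - (step_primitive 0 1 - 1)\<bar> \<le> 0 * (u - 1)"
    by (rule abs_increment_le_of_deriv_le[OF u, of _ "\<lambda>x. smooth_step 0 x - 1"])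
       (auto intro!: derivative_eq_intros has_real_derivative_step_primitive(1) simp: smooth_step_ge1)
  then show ?thesis by (simp add: step_lag_def)
qed

lemma step_primitive2_ge1: "1 \<le> u \<Longrightarrow> step_primitive2 0 u = (u - step_lag)^2 / 2 + step_excess"
proof -
  assume u: "1 \<le> u"
  have "\<bar>(step_primitive2 0 u - (u - step_lag)^2 / 2) - (step_primitive2 0 1 - (1 - step_lag)^2 / 2)\<bar>
        \<le> 0 * (u - 1)"
    by (rule abs_increment_le_of_deriv_le[OF u, of _ "\<lambda>x. step_primitive 0 x - (x - step_lag)"])
       (auto intro!: derivative_eq_intros has_real_derivative_step_primitive(2) simp: step_primitive_ge1)
  then show ?thesis by (simp add: step_excess_def step_lag_def)
qed

lemma step_primitive_lag_upper: "u - step_lag - step_primitive 0 u \<le> 0"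
proof (cases "u \<le> 1")
  case True
  have "0 * (1 - u) \<le> (1 - step_primitive 0 1) - (u - step_primitive 0 u)"
    by (rule increment_ge_of_deriv_ge[OF True, of "\<lambda>x. x - step_primitive 0 x" "\<lambda>x. 1 - smooth_step 0 x"])
       (auto intro!: derivative_eq_intros has_real_derivative_step_primitive(1) simp: smooth_step_bounds)
  then show ?thesis by (simp add: step_lag_def)
qed (simp add: step_primitive_ge1)

lemma step_primitive_lag_lower: "min u 0 - 1 \<le> u - step_lag - step_primitive 0 u"
  using step_primitive_bounds[of u] step_primitive_nonpos[of u 0] step_lag_bounds
  by (cases "u \<le> 0") auto

lemma rescale_smooth_step_zero: "0 < c \<Longrightarrow> t \<le> p \<Longrightarrow> rescale c p smooth_step k t = 0"
  by (simp add: rescale_def smooth_step_nonpos mult_nonneg_nonpos)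

lemma rescale_smooth_step_one:
  assumes "0 < c" "p + 1 / c \<le> t"
  shows "rescale c p smooth_step k t = (if k = 0 then 1 else 0)"
proof -
  have "1 \<le> c * (t - p)" using assms by (simp add: field_simps)
  then show ?thesis by (simp add: rescale_def smooth_step_ge1 smooth_step_deriv_ge1)
qed

lemma rescale_smooth_step_bounds:
  assumes "0 < d" "\<And>x. \<bar>smooth_step 1 x\<bar> \<le> B" "\<And>x. \<bar>smooth_step 2 x\<bar> \<le> B"
  shows "0 \<le> rescale (2 / d) p smooth_step 0 t" "rescale (2 / d) p smooth_step 0 t \<le> 1"
    and "\<bar>rescale (2 / d) p smooth_step 1 t\<bar> * d \<le> 2 * B"
    and "\<bar>rescale (2 / d) p smooth_step 2 t\<bar> * d^2 \<le> 4 * B"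
  using assms smooth_step_bounds by (simp_all add: rescale_def abs_mult power2_eq_square)

section \<open>Positive scalar curvature of warped products\<close>

lemma warped_scal_pos_iff:
  assumes "0 < y" "1 \<le> n"
  shows "0 < warped_scal n y y' y'' \<longleftrightarrow> 2 * y * y'' < (real n - 1) * (1 - y'^2)"
proof -
  have "warped_scal n y y' y'' = (real n / y^2) * ((real n - 1) * (1 - y'^2) - 2 * y * y'')"
    using assms(1) by (simp add: warped_scal_def field_simps power2_eq_square)
  moreover have "0 < real n / y^2" using assms by simp
  ultimately show ?thesis by (metis diff_gt_0_iff_gt mult_pos_pos zero_less_mult_pos)
qed

lemma warped_scal_pos_near:
  assumes n: "1 \<le> n" and \<eta>: "0 < \<eta>" "\<eta> < s" "\<eta> < y" and c: "0 \<le> c"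
    and margin: "2 * (y + \<eta>) * (c + \<eta>) < (real n - 1) * (1 - (s + \<eta>)^2)"
    and near: "\<bar>y0 - y\<bar> \<le> \<eta>" "\<bar>y1 - s\<bar> \<le> \<eta>" "y2 \<le> c + \<eta>"
  shows "0 < y0" "0 < y1" "0 < warped_scal n y0 y1 y2"
proof -
  show y0: "0 < y0" and y1: "0 < y1" using \<eta> near by (simp_all add: abs_le_iff)
  have "y1^2 \<le> (s + \<eta>)^2" using y1 near(2) by (intro power_mono) (simp_all add: abs_le_iff)
  then have "(real n - 1) * (1 - (s + \<eta>)^2) \<le> (real n - 1) * (1 - y1^2)"
    using n by (intro mult_left_mono) auto
  moreover have "2 * y0 * y2 \<le> 2 * (y + \<eta>) * (c + \<eta>)"
  proof (cases "y2 \<le> 0")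
    case True
    then have "2 * y0 * y2 \<le> 0" using y0 by (simp add: mult_nonneg_nonpos)
    then show ?thesis using \<eta> c by (smt (verit) mult_nonneg_nonneg)
  next
    case False
    then show ?thesis using near y0 by (intro mult_mono) (simp_all add: abs_le_iff)
  qed
  ultimately show "0 < warped_scal n y0 y1 y2"
    unfolding warped_scal_pos_iff[OF y0 n] using margin by linarith
qed

lemma eventually_warped_margin:
  fixes m y c s :: real
  assumes "2 * y * c < m * (1 - s^2)"
  shows "\<forall>\<^sub>F \<eta> in at_right 0. 2 * (y + \<eta>) * (c + \<eta>) < m * (1 - (s + \<eta>)^2)"
proof -
  have "((\<lambda>\<eta>. m * (1 - (s + \<eta>)^2) - 2 * (y + \<eta>) * (c + \<eta>)) \<longlongrightarrow>
      m * (1 - (s + 0)^2) - 2 * (y + 0) * (c + 0)) (at_right 0)"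
    by (intro tendsto_intros)
  then have "\<forall>\<^sub>F \<eta> in at_right 0. 0 < m * (1 - (s + \<eta>)^2) - 2 * (y + \<eta>) * (c + \<eta>)"
    using assms by (intro order_tendstoD(1)) auto
  then show ?thesis by (rule eventually_mono) simp
qed

lemma eventually_at_right_0_le:
  fixes f :: "real \<Rightarrow> real"
  assumes "(f \<longlongrightarrow> 0) (at_right 0)" "0 < e"
  shows "\<forall>\<^sub>F d in at_right 0. f d \<le> e"
  using order_tendstoD(2)[OF assms] by (auto elim: eventually_mono)

section \<open>The glued warping function\<close>

lemma abs_mult_le_of_abs_le: "\<bar>x\<bar> \<le> d \<Longrightarrow> 0 \<le> c \<Longrightarrow> \<bar>c * x\<bar> \<le> c * (d::real)"
  by (simp add: abs_mult mult_left_mono)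

lemma mult_square_le_of_abs_le: "\<bar>x\<bar> \<le> d \<Longrightarrow> 0 \<le> c \<Longrightarrow> c * x^2 \<le> c * (d::real)^2"
  by (metis abs_ge_zero mult_left_mono power2_abs power_mono)

locale warped_gluing =
  fixes n :: nat and a1 b1 a2 b2 :: real and F1 F2 :: "nat \<Rightarrow> real \<Rightarrow> real"
  assumes n: "3 \<le> n"
    and int1: "a1 < b1" and int2: "a2 < b2"
    and jet1: "jet_on F1 {a1..b1}" and jet2: "jet_on F2 {a2..b2}"
    and I1: "\<forall>t\<in>{a1..b1}. F1 0 t > 0 \<and> F1 1 t > 0 \<and> F1 2 t > 0"
    and I2: "\<forall>t\<in>{a2..b2}. F2 0 t > 0 \<and> F2 1 t > 0 \<and> F2 2 t > 0"
    and II1: "warped_psc n F1 a1 b1" and II2: "warped_psc n F2 a2 b2"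
    and III: "F1 0 b1 < F2 0 a2" "F1 1 b1 = F2 1 a2"
    and pos: "a2 - b1 = (F2 0 a2 - F1 0 b1) / F1 1 b1"
begin

definition "s = F1 1 b1"
definition "y1 = F1 0 b1"
definition "c1 = F1 2 b1"
definition "y2 = F2 0 a2"
definition "c2 = F2 2 a2"

lemma data_pos: "0 < s" "0 < y1" "0 < c1" "0 < y2" "0 < c2"
  using I1 I2 int1 int2 by (auto simp: s_def y1_def c1_def y2_def c2_def)

lemma y1_less_y2: "y1 < y2"
  using III by (simp add: y1_def y2_def)

lemma tangent_hits_a2: "y1 + s * (a2 - b1) = y2"
  using pos data_pos(1) by (simp add: s_def y1_def y2_def field_simps)

lemma slope_a2: "F2 1 a2 = s"
  using III(2) by (simp add: s_def)

lemma b1_less_a2: "b1 < a2"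
  using tangent_hits_a2 y1_less_y2 data_pos(1) by (smt (verit) mult_le_0_iff)

lemma n_ge_1: "1 \<le> n"
  using n by simp

lemma psc_b1: "2 * y1 * c1 < (real n - 1) * (1 - s^2)"
proof -
  have "0 < warped_scal n y1 s c1"
    using II1 int1 by (auto simp: warped_psc_def s_def y1_def c1_def)
  then show ?thesis using warped_scal_pos_iff[OF data_pos(2) n_ge_1] by blast
qed

lemma psc_a2: "2 * y2 * c2 < (real n - 1) * (1 - s^2)"
proof -
  have "0 < warped_scal n y2 s c2"
    using II2 int2 III(2) by (auto simp: warped_psc_def s_def y2_def c2_def)
  then show ?thesis using warped_scal_pos_iff[OF data_pos(4) n_ge_1] by blast
qed

end

text \<open>Within the margin \<eta> around the junction data (y1, s, c1) and (y2, s, c2) the scalar curvature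
  stays positive. The cutoffs have width \<delta> and the curvature is switched over intervals of
  length w = \<delta>^2; the last three assumptions say that \<delta> is small compared with \<eta>.\<close>
locale warped_gluing_scales = warped_gluing +
  fixes \<eta> \<delta> E B :: real
  assumes F1_3_bound: "\<And>t. t \<in> {a1..b1} \<Longrightarrow> \<bar>F1 3 t\<bar> \<le> E"
    and F2_3_bound: "\<And>t. t \<in> {a2..b2} \<Longrightarrow> \<bar>F2 3 t\<bar> \<le> E"
    and step_1_bound: "\<And>x. \<bar>smooth_step 1 x\<bar> \<le> B"
    and step_2_bound: "\<And>x. \<bar>smooth_step 2 x\<bar> \<le> B"
    and margin: "0 < \<eta>" "\<eta> < s" "\<eta> < y1"
      "2 * (y1 + \<eta>) * (c1 + \<eta>) < (real n - 1) * (1 - (s + \<eta>)^2)"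
      "2 * (y2 + \<eta>) * (c2 + \<eta>) < (real n - 1) * (1 - (s + \<eta>)^2)"
    and scale: "0 < \<delta>" "\<delta> \<le> 1/2" "2 * \<delta> \<le> b1 - a1" "2 * \<delta> \<le> b2 - a2" "2 * \<delta> \<le> a2 - b1"
    and small_value:
      "s * \<delta> + (c1 + c2) * \<delta>^2 + 2 * (c1 + c2) * \<bar>step_excess\<bar> * \<delta>^4 + E * \<delta>^3 \<le> \<eta>"
    and small_slope:
      "(c1 + c2) * \<delta> + (1 + 2 * B) * E * \<delta>^2 + 2 * B * (c1 + c2) * \<bar>step_excess\<bar> * \<delta>^3 \<le> \<eta>"
    and small_curvature:
      "(1 + 8 * B) * E * \<delta> + 4 * B * (c1 + c2) * \<bar>step_excess\<bar> * \<delta>^2 \<le> \<eta>"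
begin

lemma E_nonneg: "0 \<le> E"
  using F1_3_bound[of b1] int1 by (meson abs_ge_zero atLeastAtMost_iff order.trans less_imp_le order_refl)

lemma B_nonneg: "0 \<le> B"
  using step_1_bound[of 0] by (meson abs_ge_zero order.trans)

definition "w = \<delta>^2"

lemma w_pos: "0 < w" and w_le: "w \<le> \<delta> / 2"
  using scale(1,2) by (simp_all add: w_def power2_eq_square mult_right_mono)

definition "phase p t = (t - p) / w + step_lag"

lemma phase_nonpos: "t \<le> p - \<delta> / 2 \<Longrightarrow> phase p t \<le> 0"
proof -
  assume t: "t \<le> p - \<delta> / 2"
  have "(t - p) / w \<le> (- \<delta> / 2) / w" using t w_pos by (intro divide_right_mono) auto
  also have "\<dots> = - 1 / (2 * \<delta>)" using scale(1) by (simp add: w_def power2_eq_square field_simps)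
  also have "\<dots> \<le> - 1" using scale(1,2) by (simp add: field_simps)
  finally show ?thesis using step_lag_bounds by (simp add: phase_def)
qed

lemma phase_ge1: "p + \<delta> / 2 \<le> t \<Longrightarrow> 1 \<le> phase p t"
proof -
  assume t: "p + \<delta> / 2 \<le> t"
  have "1 \<le> 1 / (2 * \<delta>)" using scale(1,2) by (simp add: field_simps)
  also have "\<dots> = (\<delta> / 2) / w" using scale(1) by (simp add: w_def power2_eq_square field_simps)
  also have "\<dots> \<le> (t - p) / w" using t w_pos by (intro divide_right_mono) auto
  finally show ?thesis using step_lag_bounds by (simp add: phase_def)
qed

lemma phase_scaled: "w * (phase p t - step_lag) = t - p"
  using w_pos by (simp add: phase_def)

lemma scaled_primitives_after:
  assumes "1 \<le> phase p t"
  shows "w * step_primitive 0 (phase p t) = t - p"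
    and "w^2 * step_primitive2 0 (phase p t) = (t - p)^2 / 2 + step_excess * w^2"
proof -
  show "w * step_primitive 0 (phase p t) = t - p"
    by (simp only: step_primitive_ge1[OF assms] phase_scaled)
  have "w^2 * step_primitive2 0 (phase p t) = (w * (phase p t - step_lag))^2 / 2 + step_excess * w^2"
    unfolding step_primitive2_ge1[OF assms] power_mult_distrib by (simp add: algebra_simps)
  then show "w^2 * step_primitive2 0 (phase p t) = (t - p)^2 / 2 + step_excess * w^2"
    by (simp only: phase_scaled)
qed

lemma scaled_primitives_before:
  assumes "t - p \<le> \<delta> / 2"
  shows "0 \<le> w * step_primitive 0 (phase p t) \<and> w * step_primitive 0 (phase p t) \<le> \<delta>"
    and "0 \<le> w^2 * step_primitive2 0 (phase p t) \<and> w^2 * step_primitive2 0 (phase p t) \<le> \<delta>^2"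
proof -
  let ?u = "phase p t"
  have "0 \<le> w * step_primitive 0 ?u \<and> w * step_primitive 0 ?u \<le> \<delta> \<and>
        0 \<le> w^2 * step_primitive2 0 ?u \<and> w^2 * step_primitive2 0 ?u \<le> \<delta>^2"
  proof (cases "?u \<le> 0")
    case True
    then show ?thesis using scale(1) by (simp add: step_primitive_nonpos step_primitive2_nonpos)
  next
    case False
    have eq: "w * ?u = t - p + step_lag * w" using phase_scaled[of p t] by (simp add: algebra_simps)
    have lag: "step_lag * w \<le> w" using step_lag_bounds w_pos by (simp add: mult_left_le_one_le)
    have wu: "0 \<le> w * ?u" using False w_pos by simp
    have wu': "w * ?u \<le> \<delta>" unfolding eq using lag w_le assms by linarith
    have \<Sigma>: "0 \<le> step_primitive 0 ?u" "step_primitive 0 ?u \<le> ?u"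
      and \<Sigma>2: "0 \<le> step_primitive2 0 ?u" "step_primitive2 0 ?u \<le> ?u * ?u"
      using step_primitive_bounds[of ?u] step_primitive2_bounds[of ?u] False by auto
    have "w * step_primitive 0 ?u \<le> w * ?u" using \<Sigma> w_pos by (intro mult_left_mono) auto
    moreover have "w^2 * step_primitive2 0 ?u \<le> (w * ?u)^2"
      using \<Sigma>2 w_pos by (simp add: power2_eq_square mult_left_mono)
    moreover have "(w * ?u)^2 \<le> \<delta>^2" using wu wu' by (intro power_mono) auto
    moreover have "0 \<le> w * step_primitive 0 ?u" "0 \<le> w^2 * step_primitive2 0 ?u"
      using \<Sigma> \<Sigma>2 w_pos by simp_all
    ultimately show ?thesis using wu' by (intro conjI; linarith)
  qed
  then show "0 \<le> w * step_primitive 0 ?u \<and> w * step_primitive 0 ?u \<le> \<delta>"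
    and "0 \<le> w^2 * step_primitive2 0 ?u \<and> w^2 * step_primitive2 0 ?u \<le> \<delta>^2" by auto
qed

lemma scaled_primitive_lag:
  assumes "- \<delta> / 2 \<le> t - p"
  shows "- \<delta> \<le> (t - p) - w * step_primitive 0 (phase p t)"
    and "(t - p) - w * step_primitive 0 (phase p t) \<le> 0"
proof -
  let ?u = "phase p t"
  have eq: "(t - p) - w * step_primitive 0 ?u = w * (?u - step_lag - step_primitive 0 ?u)"
    using phase_scaled[of p t] by (simp add: algebra_simps)
  show "(t - p) - w * step_primitive 0 ?u \<le> 0"
    unfolding eq using step_primitive_lag_upper w_pos by (simp add: mult_nonneg_nonpos)
  have "w * (min ?u 0 - 1) \<le> w * (?u - step_lag - step_primitive 0 ?u)"
    using step_primitive_lag_lower w_pos by (intro mult_left_mono) auto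
  moreover have "w * (min ?u 0 - 1) = min (t - p + step_lag * w) 0 - w"
    using phase_scaled[of p t] w_pos by (simp add: min_mult_distrib_left algebra_simps)
  moreover have "0 \<le> step_lag * w" using step_lag_bounds w_pos by simp
  then have "- \<delta> / 2 \<le> min (t - p + step_lag * w) 0" using assms scale(1) by simp
  ultimately show "- \<delta> \<le> (t - p) - w * step_primitive 0 ?u"
    unfolding eq using w_le by linarith
qed

lemma delta_pow4_le: "\<delta>^4 \<le> \<delta>^2 / 2"
proof -
  have "\<delta>^2 \<le> 1/4" using scale(1,2) power_mono[of \<delta> "1/2" 2] by (simp add: power2_eq_square)
  then have "\<delta>^2 * \<delta>^2 \<le> (1/4) * \<delta>^2" by (intro mult_right_mono) auto
  moreover have "\<delta>^4 = \<delta>^2 * \<delta>^2" by (simp add: power4_eq_xxxx power2_eq_square)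
  ultimately show ?thesis using zero_le_power2[of \<delta>] by linarith
qed

lemma scaled_primitive2_abs:
  assumes "\<bar>t - p\<bar> \<le> \<delta>"
  shows "\<bar>w^2 * step_primitive2 0 (phase p t)\<bar> \<le> \<delta>^2 / 2 + \<bar>step_excess\<bar> * \<delta>^4"
proof -
  let ?u = "phase p t"
  have w2: "w^2 = \<delta>^4" by (simp add: w_def power_mult[symmetric])
  consider "?u \<le> 0" | "0 < ?u" "?u \<le> 1" | "1 \<le> ?u" by linarith
  then show ?thesis
  proof cases
    case 1
    then show ?thesis by (simp add: step_primitive2_nonpos)
  next
    case 2
    have "?u * ?u \<le> 1" using 2 by (intro mult_le_one) auto
    then have \<Sigma>2: "0 \<le> step_primitive2 0 ?u" "step_primitive2 0 ?u \<le> 1"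
      using step_primitive2_bounds[of ?u] 2 by auto
    have "w^2 * step_primitive2 0 ?u \<le> w^2 * 1" using \<Sigma>2 by (intro mult_left_mono) auto
    moreover have "0 \<le> w^2 * step_primitive2 0 ?u" using \<Sigma>2 by simp
    moreover have "0 \<le> \<bar>step_excess\<bar> * \<delta>^4" by simp
    ultimately show ?thesis using delta_pow4_le unfolding w2 abs_le_iff by linarith
  next
    case 3
    have "(t - p)^2 \<le> \<delta>^2" using assms by (metis abs_ge_zero power2_abs power_mono)
    moreover have "\<bar>step_excess * w^2\<bar> \<le> \<bar>step_excess\<bar> * \<delta>^4" by (simp add: abs_mult w2)
    ultimately show ?thesis
      unfolding scaled_primitives_after(2)[OF 3] abs_le_iff using zero_le_power2[of "t - p"] by linarith
  qed
qed

definition "cutoff_left = rescale (2 / \<delta>) (b1 - \<delta>) smooth_step"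
definition "cutoff_right = rescale (2 / \<delta>) (a2 + \<delta> / 2) smooth_step"

definition "taylor_left k t =
  (if k = 0 then y1 + s * (t - b1) + c1 / 2 * (t - b1)^2 else if k = 1 then s + 2 * (c1 / 2) * (t - b1)
   else if k = 2 then 2 * (c1 / 2) else 0)"

text \<open>The Taylor parabola of F1 at b1, whose curvature is switched off around b1 and switched on
  again to c2 around a2 by rescaled copies of the double primitive of the step. The shift by
  step_lag makes the slope return exactly to s once the curvature is off.\<close>
definition "bridge k t = taylor_left k t
  - c1 * w^2 * rescale (1 / w) (b1 - step_lag * w) step_primitive2 k t
  + c2 * w^2 * rescale (1 / w) (a2 - step_lag * w) step_primitive2 k t"

definition "glued k t =
  (if t \<le> b1 - \<delta> / 2 then blend cutoff_left F1 bridge k t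
   else if t \<le> a2 + \<delta> / 2 then bridge k t
   else blend cutoff_right bridge F2 k t)"

lemma rescale_phase: "rescale (1 / w) (p - step_lag * w) D k t = (1 / w)^k * D k (phase p t)"
  using w_pos by (simp add: rescale_def phase_def field_simps)

lemma bridge_012:
  "bridge 0 t = y1 + s * (t - b1) + c1 / 2 * (t - b1)^2
     - c1 * (w^2 * step_primitive2 0 (phase b1 t)) + c2 * (w^2 * step_primitive2 0 (phase a2 t))"
  "bridge 1 t = s + c1 * (t - b1)
     - c1 * (w * step_primitive 0 (phase b1 t)) + c2 * (w * step_primitive 0 (phase a2 t))"
  "bridge 2 t = c1 - c1 * smooth_step 0 (phase b1 t) + c2 * smooth_step 0 (phase a2 t)"
  using w_pos
  by (simp_all add: bridge_def taylor_left_def rescale_phase step_primitive_derivs[unfolded One_nat_def]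
      power2_eq_square)

lemma bridge_before_bend_up:
  assumes "t \<le> a2 - \<delta> / 2"
  shows "bridge 0 t = y1 + s * (t - b1) + c1 / 2 * (t - b1)^2 - c1 * (w^2 * step_primitive2 0 (phase b1 t))"
    "bridge 1 t = s + c1 * (t - b1) - c1 * (w * step_primitive 0 (phase b1 t))"
    "bridge 2 t = c1 - c1 * smooth_step 0 (phase b1 t)"
  unfolding bridge_012 using phase_nonpos[OF assms]
  by (simp_all add: step_primitive2_nonpos step_primitive_nonpos smooth_step_nonpos)

lemma bridge_after_bend_down:
  assumes "b1 + \<delta> / 2 \<le> t"
  shows "bridge 0 t = y2 + s * (t - a2) - c1 * step_excess * w^2 + c2 * (w^2 * step_primitive2 0 (phase a2 t))"
    "bridge 1 t = s + c2 * (w * step_primitive 0 (phase a2 t))"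
    "bridge 2 t = c2 * smooth_step 0 (phase a2 t)"
proof -
  have u: "1 \<le> phase b1 t" by (rule phase_ge1[OF assms])
  have "y1 + s * (t - b1) = y2 + s * (t - a2)" using tangent_hits_a2 by (simp add: algebra_simps)
  then show "bridge 0 t = y2 + s * (t - a2) - c1 * step_excess * w^2 + c2 * (w^2 * step_primitive2 0 (phase a2 t))"
    unfolding bridge_012 scaled_primitives_after(2)[OF u] by (simp add: algebra_simps)
  show "bridge 1 t = s + c2 * (w * step_primitive 0 (phase a2 t))"
    unfolding bridge_012 scaled_primitives_after(1)[OF u] by simp
  show "bridge 2 t = c2 * smooth_step 0 (phase a2 t)"
    unfolding bridge_012 smooth_step_ge1[OF u] by simp
qed

lemma cutoff_left_zero: "t \<le> b1 - \<delta> \<Longrightarrow> cutoff_left k t = 0"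
  using scale(1) by (simp add: cutoff_left_def rescale_smooth_step_zero)

lemma cutoff_left_one: "b1 - \<delta> / 2 \<le> t \<Longrightarrow> cutoff_left k t = (if k = 0 then 1 else 0)"
  unfolding cutoff_left_def using scale(1) by (intro rescale_smooth_step_one) auto

lemma cutoff_right_zero: "t \<le> a2 + \<delta> / 2 \<Longrightarrow> cutoff_right k t = 0"
  using scale(1) by (simp add: cutoff_right_def rescale_smooth_step_zero)

lemma cutoff_right_one: "a2 + \<delta> \<le> t \<Longrightarrow> cutoff_right k t = (if k = 0 then 1 else 0)"
  unfolding cutoff_right_def using scale(1) by (intro rescale_smooth_step_one) auto

lemma glued_eq_F1: "t \<le> b1 - \<delta> \<Longrightarrow> glued k t = F1 k t"
  using scale(1) by (simp add: glued_def blend_eq_left cutoff_left_zero)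

lemma glued_eq_left_blend: "t \<le> b1 - \<delta> / 2 \<Longrightarrow> glued k t = blend cutoff_left F1 bridge k t"
  by (simp add: glued_def)

lemma glued_eq_bridge: "b1 - \<delta> / 2 \<le> t \<Longrightarrow> t \<le> a2 + \<delta> / 2 \<Longrightarrow> glued k t = bridge k t"
  by (auto simp: glued_def blend_eq_right cutoff_left_one)

lemma glued_eq_right_blend: "a2 + \<delta> / 2 \<le> t \<Longrightarrow> glued k t = blend cutoff_right bridge F2 k t"
  using scale b1_less_a2 by (auto simp: glued_def blend_eq_left cutoff_right_zero)

lemma glued_eq_F2: "a2 + \<delta> \<le> t \<Longrightarrow> glued k t = F2 k t"
  using scale(1) by (simp add: glued_eq_right_blend blend_eq_right cutoff_right_one)

lemma jet_on_glued: "jet_on glued {a1..b2}"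
proof -
  have cutoffs: "jet_on cutoff_left S" "jet_on cutoff_right S" for S
    unfolding cutoff_left_def cutoff_right_def by (simp_all add: jet_on_rescale jet_on_smooth_step)
  have bridge: "jet_on bridge S" for S
    unfolding bridge_def[abs_def] taylor_left_def[abs_def]
    by (intro jet_on_add jet_on_diff jet_on_cmult jet_on_quadratic jet_on_rescale jet_on_step_primitive2)
  have left: "jet_on (blend cutoff_left F1 bridge) {a1..b1 - \<delta> / 2}"
    using scale by (intro jet_on_blend cutoffs bridge jet_on_subset[OF jet1]) auto
  have right: "jet_on (blend cutoff_right bridge F2) {a2 + \<delta> / 2..b2}"
    using scale by (intro jet_on_blend cutoffs bridge jet_on_subset[OF jet2]) auto
  have "jet_on (\<lambda>k t. if t \<le> a2 + \<delta> / 2 then bridge k t else blend cutoff_right bridge F2 k t)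
      {b1 - \<delta> / 2..b2}"
    using scale b1_less_a2 by (intro jet_on_glue[OF _ _ bridge right]) (auto simp: blend_eq_left cutoff_right_zero)
  then show ?thesis
    unfolding glued_def[abs_def] using scale b1_less_a2 int1
    by (intro jet_on_glue[OF _ _ left]) (auto simp: blend_eq_right cutoff_left_one)
qed

definition "admissible t \<longleftrightarrow>
  0 < glued 0 t \<and> 0 < glued 1 t \<and> 0 < warped_scal n (glued 0 t) (glued 1 t) (glued 2 t)"

lemma admissible_near_b1:
  assumes "\<bar>glued 0 t - y1\<bar> \<le> \<eta>" "\<bar>glued 1 t - s\<bar> \<le> \<eta>" "glued 2 t \<le> c1 + \<eta>"
  shows "admissible t"
  using warped_scal_pos_near[OF n_ge_1 margin(1-3) _ margin(4) assms] data_pos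
  unfolding admissible_def by simp

lemma admissible_near_a2:
  assumes "\<bar>glued 0 t - y2\<bar> \<le> \<eta>" "\<bar>glued 1 t - s\<bar> \<le> \<eta>" "glued 2 t \<le> c2 + \<eta>"
  shows "admissible t"
  using warped_scal_pos_near[OF n_ge_1 margin(1,2) _ _ margin(5) assms] margin(3) y1_less_y2 data_pos
  unfolding admissible_def by simp

lemma cutoff_left_bounds:
  "0 \<le> cutoff_left 0 t" "cutoff_left 0 t \<le> 1"
  "\<bar>cutoff_left 1 t\<bar> * \<delta> \<le> 2 * B" "\<bar>cutoff_left 2 t\<bar> * \<delta>^2 \<le> 4 * B"
  unfolding cutoff_left_def by (rule rescale_smooth_step_bounds[OF scale(1) step_1_bound step_2_bound])+

lemma cutoff_right_bounds:
  "0 \<le> cutoff_right 0 t" "cutoff_right 0 t \<le> 1"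
  "\<bar>cutoff_right 1 t\<bar> * \<delta> \<le> 2 * B" "\<bar>cutoff_right 2 t\<bar> * \<delta>^2 \<le> 4 * B"
  unfolding cutoff_right_def by (rule rescale_smooth_step_bounds[OF scale(1) step_1_bound step_2_bound])+

lemma small_value_le:
  assumes "0 \<le> c" "c \<le> c1 + c2" "0 \<le> K" "K \<le> 2 * (c1 + c2) * \<bar>step_excess\<bar>"
  shows "s * \<delta> + c * \<delta>^2 + K * \<delta>^4 + E * \<delta>^3 \<le> \<eta>"
  using mult_right_mono[OF assms(2), of "\<delta>^2"] mult_right_mono[OF assms(4), of "\<delta>^4"] small_value
  by simp

lemma small_slope_le:
  assumes "0 \<le> c" "c \<le> c1 + c2" "0 \<le> K" "K \<le> 2 * B * (c1 + c2) * \<bar>step_excess\<bar>"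
  shows "c * \<delta> + (1 + 2 * B) * E * \<delta>^2 + K * \<delta>^3 \<le> \<eta>"
proof -
  have "c * \<delta> \<le> (c1 + c2) * \<delta>" using assms(2) scale(1) by (simp add: mult_right_mono)
  moreover have "K * \<delta>^3 \<le> 2 * B * (c1 + c2) * \<bar>step_excess\<bar> * \<delta>^3"
    using assms(4) scale(1) by (simp add: mult_right_mono)
  ultimately show ?thesis using small_slope by linarith
qed

lemma small_curvature_le:
  assumes "0 \<le> K" "K \<le> 4 * B * (c1 + c2) * \<bar>step_excess\<bar>"
  shows "(1 + 8 * B) * E * \<delta> + K * \<delta>^2 \<le> \<eta>"
  using mult_right_mono[OF assms(2), of "\<delta>^2"] small_curvature by simp

lemma admissible_F1_part: "a1 \<le> t \<Longrightarrow> t \<le> b1 - \<delta> \<Longrightarrow> admissible t"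
  using I1 II1 scale(1) by (auto simp: admissible_def glued_eq_F1 warped_psc_def)

lemma admissible_F2_part: "a2 + \<delta> \<le> t \<Longrightarrow> t \<le> b2 \<Longrightarrow> admissible t"
  using I2 II2 scale(1) by (auto simp: admissible_def glued_eq_F2 warped_psc_def)

lemma admissible_left_blend:
  assumes t: "b1 - \<delta> \<le> t" "t \<le> b1 - \<delta> / 2"
  shows "admissible t"
proof -
  have t2: "t \<le> a2 - \<delta> / 2" using t scale(5) by simp
  have M: "bridge 0 t = y1 + s * (t - b1) + c1 / 2 * (t - b1)^2"
    "bridge 1 t = s + c1 * (t - b1)" "bridge 2 t = c1"
    unfolding bridge_before_bend_up[OF t2] using phase_nonpos[OF t(2)]
    by (simp_all add: step_primitive2_nonpos step_primitive_nonpos smooth_step_nonpos)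
  have x: "\<bar>t - b1\<bar> \<le> \<delta>" using t scale(1) by simp
  have "\<bar>F1 0 t - bridge 0 t\<bar> \<le> (E * \<delta>) * \<delta>^2" "\<bar>F1 1 t - bridge 1 t\<bar> \<le> (E * \<delta>) * \<delta>"
    "\<bar>F1 2 t - bridge 2 t\<bar> \<le> E * \<delta>"
    using taylor2_remainder_bounds[OF jet1 convex_real_interval(5) _ _ F1_3_bound x] t scale int1
    unfolding M s_def y1_def c1_def by (simp_all add: power3_eq_cube power2_eq_square mult.assoc)
  from blend_close_to_end[where A = F1 and B = bridge, OF scale(1) cutoff_left_bounds this]
  have G: "\<bar>glued 0 t - bridge 0 t\<bar> \<le> E * \<delta>^3" "\<bar>glued 1 t - bridge 1 t\<bar> \<le> (1 + 2 * B) * E * \<delta>^2"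
    "\<bar>glued 2 t - bridge 2 t\<bar> \<le> (1 + 8 * B) * E * \<delta>"
    using glued_eq_left_blend[OF t(2)] by (simp_all add: power2_eq_square power3_eq_cube algebra_simps)
  have "\<bar>s * (t - b1)\<bar> \<le> s * \<delta>" "\<bar>c1 * (t - b1)\<bar> \<le> c1 * \<delta>"
    "c1 / 2 * (t - b1)^2 \<le> c1 / 2 * \<delta>^2" "0 \<le> c1 / 2 * (t - b1)^2"
    using x data_pos by (simp_all add: abs_mult_le_of_abs_le mult_square_le_of_abs_le)
  moreover have "s * \<delta> + c1 / 2 * \<delta>^2 + 0 * \<delta>^4 + E * \<delta>^3 \<le> \<eta>"
    by (rule small_value_le) (use data_pos in simp_all)
  moreover have "c1 * \<delta> + (1 + 2 * B) * E * \<delta>^2 + 0 * \<delta>^3 \<le> \<eta>"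
    by (rule small_slope_le) (use data_pos B_nonneg in simp_all)
  moreover have "(1 + 8 * B) * E * \<delta> + 0 * \<delta>^2 \<le> \<eta>"
    by (rule small_curvature_le) (use data_pos B_nonneg in simp_all)
  ultimately show ?thesis
    using G unfolding M abs_le_iff by (intro admissible_near_b1; linarith)
qed

lemma admissible_bend_down:
  assumes t: "b1 - \<delta> / 2 \<le> t" "t \<le> b1 + \<delta> / 2"
  shows "admissible t"
proof -
  let ?u = "phase b1 t"
  have t2: "t \<le> a2 - \<delta> / 2" using t scale(5) by simp
  have glued: "glued k t = bridge k t" for k using t t2 scale(1) by (intro glued_eq_bridge) auto
  note M = bridge_before_bend_up[OF t2]
  have x: "\<bar>t - b1\<bar> \<le> \<delta>" using t scale(1) by simp
  have lag: "- \<delta> \<le> (t - b1) - w * step_primitive 0 ?u" "(t - b1) - w * step_primitive 0 ?u \<le> 0"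
    using scaled_primitive_lag[where p = b1 and t = t] t by simp_all
  have "c1 * (- \<delta>) \<le> c1 * ((t - b1) - w * step_primitive 0 ?u)"
    by (rule mult_left_mono) (use lag data_pos in auto)
  moreover have "c1 * ((t - b1) - w * step_primitive 0 ?u) \<le> 0"
    by (rule mult_nonneg_nonpos) (use lag data_pos in auto)
  ultimately have slope: "- (c1 * \<delta>) \<le> c1 * (t - b1) - c1 * (w * step_primitive 0 ?u)"
    "c1 * (t - b1) - c1 * (w * step_primitive 0 ?u) \<le> 0"
    by (simp_all add: algebra_simps)
  have "\<bar>c1 * (w^2 * step_primitive2 0 ?u)\<bar> \<le> c1 * \<delta>^2 / 2 + c1 * \<bar>step_excess\<bar> * \<delta>^4"
    using abs_mult_le_of_abs_le[OF scaled_primitive2_abs[OF x], of c1] data_pos by (simp add: algebra_simps)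
  moreover have "\<bar>s * (t - b1)\<bar> \<le> s * \<delta>" "c1 / 2 * (t - b1)^2 \<le> c1 * \<delta>^2 / 2"
    "0 \<le> c1 / 2 * (t - b1)^2"
    using x data_pos mult_square_le_of_abs_le[OF x, of "c1 / 2"] by (simp_all add: abs_mult_le_of_abs_le)
  moreover have "s * \<delta> + c1 * \<delta>^2 + (c1 * \<bar>step_excess\<bar>) * \<delta>^4 + E * \<delta>^3 \<le> \<eta>"
    by (rule small_value_le) (use data_pos in \<open>simp_all add: mult_right_mono\<close>)
  moreover have "c1 * \<delta> + (1 + 2 * B) * E * \<delta>^2 + 0 * \<delta>^3 \<le> \<eta>"
    by (rule small_slope_le) (use data_pos B_nonneg in simp_all)
  moreover have "0 \<le> c1 * smooth_step 0 ?u" "0 \<le> E * \<delta>^3" "0 \<le> (1 + 2 * B) * E * \<delta>^2"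
    using data_pos smooth_step_bounds E_nonneg B_nonneg scale(1) by simp_all
  ultimately show ?thesis
    using margin(1) slope unfolding abs_le_iff
    by (intro admissible_near_b1; unfold glued M abs_le_iff; linarith)
qed

lemma admissible_linear_part:
  assumes t: "b1 + \<delta> / 2 \<le> t" "t \<le> a2 - \<delta> / 2"
  shows "admissible t"
proof -
  have glued: "glued k t = bridge k t" for k using t scale(1) by (intro glued_eq_bridge) auto
  have M: "bridge 0 t = y1 + s * (t - b1) - c1 * step_excess * w^2" "bridge 1 t = s" "bridge 2 t = 0"
    unfolding bridge_after_bend_down[OF t(1)] using phase_nonpos[OF t(2)] tangent_hits_a2
    by (simp_all add: step_primitive2_nonpos step_primitive_nonpos smooth_step_nonpos algebra_simps)
  have "\<bar>c1 * step_excess * w^2\<bar> \<le> (c1 * \<bar>step_excess\<bar>) * \<delta>^4"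
    using data_pos by (simp add: abs_mult w_def power_mult[symmetric])
  moreover have "s * \<delta> + 0 * \<delta>^2 + (c1 * \<bar>step_excess\<bar>) * \<delta>^4 + E * \<delta>^3 \<le> \<eta>"
    by (rule small_value_le) (use data_pos in \<open>simp_all add: mult_right_mono\<close>)
  moreover have "0 \<le> s * (t - b1)" "0 \<le> s * \<delta>" "0 \<le> E * \<delta>^3"
    using t data_pos scale(1) E_nonneg by simp_all
  ultimately have pos: "0 < bridge 0 t" unfolding M abs_le_iff using margin(3) by linarith
  have "0 < (real n - 1) * (1 - s^2)"
    using psc_b1 data_pos by (smt (verit) mult_pos_pos)
  then have "0 < warped_scal n (bridge 0 t) s 0"
    using warped_scal_pos_iff[OF pos n_ge_1] by simp
  then show ?thesis
    unfolding admissible_def glued M(2,3) using pos data_pos by simp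
qed

lemma admissible_bend_up:
  assumes t: "a2 - \<delta> / 2 \<le> t" "t \<le> a2 + \<delta> / 2"
  shows "admissible t"
proof -
  let ?v = "phase a2 t"
  have t1: "b1 + \<delta> / 2 \<le> t" using t scale(5) by simp
  have glued: "glued k t = bridge k t" for k using t t1 scale(1) by (intro glued_eq_bridge) auto
  note M = bridge_after_bend_down[OF t1]
  have x: "\<bar>t - a2\<bar> \<le> \<delta>" using t scale(1) by simp
  have \<Sigma>: "0 \<le> w * step_primitive 0 ?v" "w * step_primitive 0 ?v \<le> \<delta>"
    "0 \<le> w^2 * step_primitive2 0 ?v" "w^2 * step_primitive2 0 ?v \<le> \<delta>^2"
    using scaled_primitives_before[where p = a2 and t = t] t by simp_all
  have "0 \<le> c2 * (w * step_primitive 0 ?v)" "c2 * (w * step_primitive 0 ?v) \<le> c2 * \<delta>"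
    "0 \<le> c2 * (w^2 * step_primitive2 0 ?v)" "c2 * (w^2 * step_primitive2 0 ?v) \<le> c2 * \<delta>^2"
    "c2 * smooth_step 0 ?v \<le> c2"
    using \<Sigma> data_pos smooth_step_bounds(2)[of ?v] by (simp_all add: mult_left_mono)
  moreover have "\<bar>c1 * step_excess * w^2\<bar> \<le> (c1 * \<bar>step_excess\<bar>) * \<delta>^4" "\<bar>s * (t - a2)\<bar> \<le> s * \<delta>"
    using data_pos x by (simp_all add: abs_mult w_def power_mult[symmetric] abs_mult_le_of_abs_le)
  moreover have "s * \<delta> + c2 * \<delta>^2 + (c1 * \<bar>step_excess\<bar>) * \<delta>^4 + E * \<delta>^3 \<le> \<eta>"
    by (rule small_value_le) (use data_pos in \<open>simp_all add: mult_right_mono\<close>)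
  moreover have "c2 * \<delta> + (1 + 2 * B) * E * \<delta>^2 + 0 * \<delta>^3 \<le> \<eta>"
    by (rule small_slope_le) (use data_pos B_nonneg in simp_all)
  moreover have "0 \<le> E * \<delta>^3" "0 \<le> (1 + 2 * B) * E * \<delta>^2"
    using E_nonneg B_nonneg scale(1) by simp_all
  ultimately show ?thesis
    using margin(1) unfolding abs_le_iff by (intro admissible_near_a2; unfold glued M abs_le_iff; linarith)
qed

lemma bridge_after_bends:
  assumes "a2 + \<delta> / 2 \<le> t"
  shows "bridge 0 t = y2 + s * (t - a2) + c2 / 2 * (t - a2)^2 + (c2 - c1) * step_excess * w^2"
    "bridge 1 t = s + c2 * (t - a2)" "bridge 2 t = c2"
proof -
  have t1: "b1 + \<delta> / 2 \<le> t" using assms scale(1,5) by simp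
  have v: "1 \<le> phase a2 t" by (rule phase_ge1[OF assms])
  show "bridge 0 t = y2 + s * (t - a2) + c2 / 2 * (t - a2)^2 + (c2 - c1) * step_excess * w^2"
    "bridge 1 t = s + c2 * (t - a2)" "bridge 2 t = c2"
    unfolding bridge_after_bend_down[OF t1] scaled_primitives_after[OF v] smooth_step_ge1[OF v]
    by (simp_all add: algebra_simps)
qed

lemma F2_close_to_bridge:
  assumes t: "a2 + \<delta> / 2 \<le> t" "t \<le> a2 + \<delta>"
  defines "K \<equiv> (c1 + c2) * \<bar>step_excess\<bar>"
  shows "\<bar>F2 0 t - bridge 0 t\<bar> \<le> (E * \<delta> + K * \<delta>^2) * \<delta>^2"
    and "\<bar>F2 1 t - bridge 1 t\<bar> \<le> (E * \<delta>) * \<delta>" "\<bar>F2 2 t - bridge 2 t\<bar> \<le> E * \<delta>"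
proof -
  note M = bridge_after_bends[OF t(1)]
  have x: "\<bar>t - a2\<bar> \<le> \<delta>" using t scale(1) by simp
  have T: "\<bar>F2 0 t - (y2 + s * (t - a2) + c2 / 2 * (t - a2)^2)\<bar> \<le> E * \<delta>^3"
    "\<bar>F2 1 t - (s + c2 * (t - a2))\<bar> \<le> E * \<delta>^2" "\<bar>F2 2 t - c2\<bar> \<le> E * \<delta>"
    using taylor2_remainder_bounds[OF jet2 convex_real_interval(5) _ _ F2_3_bound x] t scale int2
    unfolding y2_def c2_def slope_a2 by simp_all
  have "\<bar>(c2 - c1) * step_excess * w^2\<bar> \<le> K * \<delta>^4"
    using data_pos by (simp add: K_def abs_mult w_def power_mult[symmetric] mult_right_mono)
  then have "\<bar>F2 0 t - bridge 0 t\<bar> \<le> E * \<delta>^3 + K * \<delta>^4"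
    using T(1) unfolding M abs_le_iff by linarith
  moreover have "E * \<delta>^3 + K * \<delta>^4 = (E * \<delta> + K * \<delta>^2) * \<delta>^2"
    by (simp add: algebra_simps power2_eq_square power3_eq_cube power4_eq_xxxx)
  ultimately show "\<bar>F2 0 t - bridge 0 t\<bar> \<le> (E * \<delta> + K * \<delta>^2) * \<delta>^2" by simp
  show "\<bar>F2 1 t - bridge 1 t\<bar> \<le> (E * \<delta>) * \<delta>" "\<bar>F2 2 t - bridge 2 t\<bar> \<le> E * \<delta>"
    using T(2,3) unfolding M by (simp_all add: power2_eq_square mult.assoc)
qed

lemma admissible_right_blend:
  assumes t: "a2 + \<delta> / 2 \<le> t" "t \<le> a2 + \<delta>"
  shows "admissible t"
proof -
  let ?K = "(c1 + c2) * \<bar>step_excess\<bar>"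
  note M = bridge_after_bends[OF t(1)]
  from blend_close_to_start[where A = bridge and B = F2, OF scale(1) cutoff_right_bounds
      F2_close_to_bridge[OF t]]
  have G: "\<bar>glued 0 t - bridge 0 t\<bar> \<le> E * \<delta>^3 + ?K * \<delta>^4"
    "\<bar>glued 1 t - bridge 1 t\<bar> \<le> (1 + 2 * B) * E * \<delta>^2 + (2 * B * ?K) * \<delta>^3"
    "\<bar>glued 2 t - bridge 2 t\<bar> \<le> (1 + 8 * B) * E * \<delta> + (4 * B * ?K) * \<delta>^2"
    using glued_eq_right_blend[OF t(1)]
    by (simp_all add: power2_eq_square power3_eq_cube power4_eq_xxxx algebra_simps)
  have x: "\<bar>t - a2\<bar> \<le> \<delta>" using t scale(1) by simp
  have "\<bar>(c2 - c1) * step_excess * w^2\<bar> \<le> ?K * \<delta>^4"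
    using data_pos by (simp add: abs_mult w_def power_mult[symmetric] mult_right_mono)
  moreover have "\<bar>s * (t - a2)\<bar> \<le> s * \<delta>" "c2 / 2 * (t - a2)^2 \<le> c2 / 2 * \<delta>^2"
    "0 \<le> c2 / 2 * (t - a2)^2" "0 \<le> c2 * (t - a2)" "c2 * (t - a2) \<le> c2 * \<delta>"
    using x t scale(1) data_pos by (simp_all add: abs_mult_le_of_abs_le mult_square_le_of_abs_le)
  moreover have "s * \<delta> + c2 / 2 * \<delta>^2 + (2 * ?K) * \<delta>^4 + E * \<delta>^3 \<le> \<eta>"
    by (rule small_value_le) (use data_pos in \<open>simp_all add: algebra_simps\<close>)
  moreover have "c2 * \<delta> + (1 + 2 * B) * E * \<delta>^2 + (2 * B * ?K) * \<delta>^3 \<le> \<eta>"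
    by (rule small_slope_le) (use data_pos B_nonneg in simp_all)
  moreover have "(1 + 8 * B) * E * \<delta> + (4 * B * ?K) * \<delta>^2 \<le> \<eta>"
    by (rule small_curvature_le) (use data_pos B_nonneg in simp_all)
  ultimately show ?thesis
    using G unfolding abs_le_iff by (intro admissible_near_a2; unfold M abs_le_iff; linarith)
qed

lemma admissible_everywhere:
  assumes "t \<in> {a1..b2}"
  shows "admissible t"
proof -
  consider "t \<le> b1 - \<delta>" | "b1 - \<delta> \<le> t" "t \<le> b1 - \<delta> / 2" | "b1 - \<delta> / 2 \<le> t" "t \<le> b1 + \<delta> / 2"
    | "b1 + \<delta> / 2 \<le> t" "t \<le> a2 - \<delta> / 2" | "a2 - \<delta> / 2 \<le> t" "t \<le> a2 + \<delta> / 2"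
    | "a2 + \<delta> / 2 \<le> t" "t \<le> a2 + \<delta>" | "a2 + \<delta> \<le> t"
    by linarith
  then show ?thesis
    using assms admissible_F1_part admissible_left_blend admissible_bend_down admissible_linear_part
      admissible_bend_up admissible_right_blend admissible_F2_part
    by cases auto
qed

lemma glued_properties:
  "smooth_jet_on glued a1 b2
   \<and> (\<forall>t\<in>{a1..b2}. glued 0 t > 0 \<and> glued 1 t > 0)
   \<and> (\<forall>t\<in>{a1..(a1 + b1) / 2}. glued 0 t = F1 0 t)
   \<and> (\<forall>t\<in>{(a2 + b2) / 2..b2}. glued 0 t = F2 0 t)
   \<and> warped_psc n glued a1 b2"
  using jet_on_glued admissible_everywhere scale(3,4) glued_eq_F1 glued_eq_F2
  by (auto simp: smooth_jet_on_iff_jet_on admissible_def warped_psc_def)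

end

context warped_gluing
begin

lemma exists_margin:
  obtains \<eta> where "0 < \<eta>" "\<eta> < s" "\<eta> < y1"
    "2 * (y1 + \<eta>) * (c1 + \<eta>) < (real n - 1) * (1 - (s + \<eta>)^2)"
    "2 * (y2 + \<eta>) * (c2 + \<eta>) < (real n - 1) * (1 - (s + \<eta>)^2)"
proof -
  have "\<forall>\<^sub>F \<eta> in at_right 0. 0 < \<eta> \<and> \<eta> < s \<and> \<eta> < y1
      \<and> 2 * (y1 + \<eta>) * (c1 + \<eta>) < (real n - 1) * (1 - (s + \<eta>)^2)
      \<and> 2 * (y2 + \<eta>) * (c2 + \<eta>) < (real n - 1) * (1 - (s + \<eta>)^2)"
    using data_pos psc_b1 psc_a2
    by (intro eventually_conj eventually_at_right_less eventually_warped_margin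
        order_tendstoD(2)[OF tendsto_ident_at]) auto
  from eventually_happens'[OF trivial_limit_at_right_real this] show ?thesis
    using that by blast
qed

lemma exists_scales: "\<exists>\<eta> \<delta> E B. warped_gluing_scales n a1 b1 a2 b2 F1 F2 \<eta> \<delta> E B"
proof -
  obtain E1 where E1: "\<And>t. t \<in> {a1..b1} \<Longrightarrow> \<bar>F1 3 t\<bar> \<le> E1" using jet_on_bounded[OF jet1] by blast
  obtain E2 where E2: "\<And>t. t \<in> {a2..b2} \<Longrightarrow> \<bar>F2 3 t\<bar> \<le> E2" using jet_on_bounded[OF jet2] by blast
  define E where "E = max E1 E2"
  have E: "\<And>t. t \<in> {a1..b1} \<Longrightarrow> \<bar>F1 3 t\<bar> \<le> E" "\<And>t. t \<in> {a2..b2} \<Longrightarrow> \<bar>F2 3 t\<bar> \<le> E"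
    using E1 E2 by (fastforce simp: E_def le_max_iff_disj)+
  obtain B where B: "\<And>x. \<bar>smooth_step 1 x\<bar> \<le> B \<and> \<bar>smooth_step 2 x\<bar> \<le> B"
    using smooth_step_deriv_bound by blast
  obtain \<eta> where \<eta>: "0 < \<eta>" "\<eta> < s" "\<eta> < y1"
      "2 * (y1 + \<eta>) * (c1 + \<eta>) < (real n - 1) * (1 - (s + \<eta>)^2)"
      "2 * (y2 + \<eta>) * (c2 + \<eta>) < (real n - 1) * (1 - (s + \<eta>)^2)"
    by (rule exists_margin)
  let ?K = "\<bar>step_excess\<bar>"
  have "\<forall>\<^sub>F \<delta> in at_right 0. 0 < \<delta> \<and> \<delta> \<le> 1/2 \<and> 2 * \<delta> \<le> b1 - a1 \<and> 2 * \<delta> \<le> b2 - a2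
      \<and> 2 * \<delta> \<le> a2 - b1
      \<and> s * \<delta> + (c1 + c2) * \<delta>^2 + 2 * (c1 + c2) * ?K * \<delta>^4 + E * \<delta>^3 \<le> \<eta>
      \<and> (c1 + c2) * \<delta> + (1 + 2 * B) * E * \<delta>^2 + 2 * B * (c1 + c2) * ?K * \<delta>^3 \<le> \<eta>
      \<and> (1 + 8 * B) * E * \<delta> + 4 * B * (c1 + c2) * ?K * \<delta>^2 \<le> \<eta>"
    using int1 int2 b1_less_a2 \<eta>(1)
    by (intro eventually_conj eventually_at_right_less eventually_at_right_0_le;
        (auto intro!: tendsto_eq_intros)?)
  from eventually_happens'[OF trivial_limit_at_right_real this]
  obtain \<delta> where \<delta>: "0 < \<delta>" "\<delta> \<le> 1/2" "2 * \<delta> \<le> b1 - a1" "2 * \<delta> \<le> b2 - a2" "2 * \<delta> \<le> a2 - b1"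
      "s * \<delta> + (c1 + c2) * \<delta>^2 + 2 * (c1 + c2) * ?K * \<delta>^4 + E * \<delta>^3 \<le> \<eta>"
      "(c1 + c2) * \<delta> + (1 + 2 * B) * E * \<delta>^2 + 2 * B * (c1 + c2) * ?K * \<delta>^3 \<le> \<eta>"
      "(1 + 8 * B) * E * \<delta> + 4 * B * (c1 + c2) * ?K * \<delta>^2 \<le> \<eta>"
    by blast
  have "warped_gluing_scales n a1 b1 a2 b2 F1 F2 \<eta> \<delta> E B"
    using E B \<eta> \<delta> by unfold_locales blast+
  then show ?thesis by blast
qed

end

theorem lemma4p4:
  fixes n :: nat and a1 b1 a2 b2 :: real and F1 F2 :: "nat \<Rightarrow> real \<Rightarrow> real"
  assumes n: "n \<ge> 3"
    and int1: "a1 < b1" and int2: "a2 < b2"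
    and smooth1: "smooth_jet_on F1 a1 b1"
    and smooth2: "smooth_jet_on F2 a2 b2"
    and I1: "\<forall>t\<in>{a1..b1}. F1 0 t > 0 \<and> F1 1 t > 0 \<and> F1 2 t > 0"
    and I2: "\<forall>t\<in>{a2..b2}. F2 0 t > 0 \<and> F2 1 t > 0 \<and> F2 2 t > 0"
    and II1: "warped_psc n F1 a1 b1"
    and II2: "warped_psc n F2 a2 b2"
    and III: "F1 0 b1 < F2 0 a2" "F1 1 b1 = F2 1 a2"
    and pos: "a2 - b1 = (F2 0 a2 - F1 0 b1) / F1 1 b1"
  shows "\<exists>F :: nat \<Rightarrow> real \<Rightarrow> real.
           smooth_jet_on F a1 b2
         \<and> (\<forall>t\<in>{a1..b2}. F 0 t > 0 \<and> F 1 t > 0)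
         \<and> (\<forall>t\<in>{a1..(a1 + b1) / 2}. F 0 t = F1 0 t)
         \<and> (\<forall>t\<in>{(a2 + b2) / 2..b2}. F 0 t = F2 0 t)
         \<and> warped_psc n F a1 b2"
proof -
  interpret warped_gluing n a1 b1 a2 b2 F1 F2
    using assms by unfold_locales (simp_all add: smooth_jet_on_iff_jet_on)
  obtain \<eta> \<delta> E B where "warped_gluing_scales n a1 b1 a2 b2 F1 F2 \<eta> \<delta> E B"
    using exists_scales by blast
  then interpret warped_gluing_scales n a1 b1 a2 b2 F1 F2 \<eta> \<delta> E B .
  show ?thesis using glued_properties by blast
qed

end
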